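(* Suppose $C\in\mathcal{C}^3_{\rm c}$ satisfies $d_\infty(C,\psi(C))\neq0$. Then $C$ is a discontinuity point of the mapping $\psi:\mathcal{C}^3_{\rm c}\to\mathcal{C}^3_{\rm c}$ (with $d_\infty$ on both domain and codomain). In other words, every non-simplified $C\in\mathcal{C}^3_{\rm c}$ is a discontinuity point of $\psi$.
   Context: $\mathbb{I}=[0,1]$, $\lambda$ Lebesgue measure; $d_\infty(C_1,C_2)=\max_{\mathbf{x}\in\mathbb{I}^3}|C_1(\mathbf{x})-C_2(\mathbf{x})|$. Points of $\mathbb{I}^3$ are written $(\mathbf{u},v)$, $\mathbf{u}=(u_1,u_2)$. For a three-dimensional copula $C$, $K_C$ is (a version of) the regular conditional distribution of $(U_1,U_2)$ given $U_3=v$, $(U_1,U_2,U_3)\sim C$; $F_{1|3}(u_1|t)=K_C(t,[0,u_1]\times\mathbb{I})$, $F_{2|3}(u_2|t)=K_C(t,\mathbb{I}\times[0,u_2])$. $\mathcal{C}^3_{\rm c}$ is the set of three-dimensional copulas for which $F_{1|3}(\cdot|t)$ and $F_{2|3}(\cdot|t)$ are continuous for $\lambda$-a.e. $t$; for such $C$, for a.e. $t$ the conditional copula $C^t_{12;3}$ is the unique bivariate copula with $K_C(t,[\mathbf{0},\mathbf{u}])=C^t_{12;3}(F_{1|3}(u_1|t),F_{2|3}(u_2|t))$. $C\in\mathcal{C}^3_{\rm c}$ is simplified if there is a bivariate copula $A$ with $C(\mathbf{u},v)=\int_{[0,v]}A(F_{1|3}(u_1|t),F_{2|3}(u_2|t))\,d\lambda(t)$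 for all $(\mathbf{u},v)$. The partial copula is $C_p(\mathbf{s})=\int_{\mathbb{I}}C^t_{12;3}(\mathbf{s})\,d\lambda(t)$ and $\psi(C)(\mathbf{u},v)=\int_{[0,v]}C_p(F_{1|3}(u_1|t),F_{2|3}(u_2|t))\,d\lambda(t)$ (the partial vine copula of $C$). *)

theory Defs
  imports "HOL-Probability.Probability"
begin

definition copula2 :: "(real \<Rightarrow> real \<Rightarrow> real) \<Rightarrow> bool" where
  "copula2 A \<longleftrightarrow>
     (\<forall>u\<in>{0..1}. A 0 u = 0 \<and> A u 0 = 0 \<and> A u 1 = u \<and> A 1 u = u) \<and>
     (\<forall>a1\<in>{0..1}. \<forall>b1\<in>{0..1}. \<forall>a2\<in>{0..1}. \<forall>b2\<in>{0..1}.
        a1 \<le> b1 \<longrightarrow> a2 \<le> b2 \<longrightarrow> A b1 b2 - A a1 b2 - A b1 a2 + A a1 a2 \<ge> 0)"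

text \<open>Three-dimensional copula; arguments are (u1, u2, v).\<close>
definition copula3 :: "(real \<Rightarrow> real \<Rightarrow> real \<Rightarrow> real) \<Rightarrow> bool" where
  "copula3 C \<longleftrightarrow>
     (\<forall>x\<in>{0..1}. \<forall>y\<in>{0..1}. C 0 x y = 0 \<and> C x 0 y = 0 \<and> C x y 0 = 0) \<and>
     (\<forall>x\<in>{0..1}. C x 1 1 = x \<and> C 1 x 1 = x \<and> C 1 1 x = x) \<and>
     (\<forall>a1\<in>{0..1}. \<forall>b1\<in>{0..1}. \<forall>a2\<in>{0..1}. \<forall>b2\<in>{0..1}. \<forall>a3\<in>{0..1}. \<forall>b3\<in>{0..1}.
        a1 \<le> b1 \<longrightarrow> a2 \<le> b2 \<longrightarrow> a3 \<le> b3 \<longrightarrow>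
        C b1 b2 b3 - C a1 b2 b3 - C b1 a2 b3 - C b1 b2 a3
          + C a1 a2 b3 + C a1 b2 a3 + C b1 a2 a3 - C a1 a2 a3 \<ge> 0)"

text \<open>K is (a version of) the regular conditional distribution of (U1,U2) given U3 = t,
  where (U1,U2,U3) ~ C: a Markov kernel from I to the Borel sets of I^2 with
  C(u1,u2,v) = integral over [0,v] of K(t,[0,u1] x [0,u2]).\<close>
definition cond_kernel :: "(real \<Rightarrow> real \<Rightarrow> real \<Rightarrow> real) \<Rightarrow> (real \<Rightarrow> (real \<times> real) measure) \<Rightarrow> bool" where
  "cond_kernel C K \<longleftrightarrow>
     (\<forall>t. prob_space (K t) \<and> sets (K t) = sets (borel :: (real \<times> real) measure) \<and>
          emeasure (K t) ({0..1} \<times> {0..1}) = 1) \<and>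
     (\<forall>A \<in> sets (borel :: (real \<times> real) measure). (\<lambda>t. measure (K t) A) \<in> borel_measurable lborel) \<and>
     (\<forall>u1\<in>{0..1}. \<forall>u2\<in>{0..1}. \<forall>v\<in>{0..1}.
        C u1 u2 v = (LINT t:{0..v}|lborel. measure (K t) ({0..u1} \<times> {0..u2})))"

definition F13 :: "(real \<Rightarrow> (real \<times> real) measure) \<Rightarrow> real \<Rightarrow> real \<Rightarrow> real" where
  "F13 K u1 t = measure (K t) ({0..u1} \<times> {0..1})"

definition F23 :: "(real \<Rightarrow> (real \<times> real) measure) \<Rightarrow> real \<Rightarrow> real \<Rightarrow> real" where
  "F23 K u2 t = measure (K t) ({0..1} \<times> {0..u2})"

definition C3c :: "(real \<Rightarrow> real \<Rightarrow> real \<Rightarrow> real) set" where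
  "C3c = {C. copula3 C \<and> (\<exists>K. cond_kernel C K \<and>
            (AE t in lborel. t \<in> {0..1} \<longrightarrow>
               continuous_on UNIV (\<lambda>x. F13 K x t) \<and> continuous_on UNIV (\<lambda>x. F23 K x t)))}"

text \<open>Conditional copula C^t_{12;3} (unique for a.e. t when C is in C3c).\<close>
definition cond_copula :: "(real \<Rightarrow> (real \<times> real) measure) \<Rightarrow> real \<Rightarrow> real \<Rightarrow> real \<Rightarrow> real" where
  "cond_copula K t = (SOME A. copula2 A \<and>
     (\<forall>u1\<in>{0..1}. \<forall>u2\<in>{0..1}.
        measure (K t) ({0..u1} \<times> {0..u2}) = A (F13 K u1 t) (F23 K u2 t)))"

definition partial_copula :: "(real \<Rightarrow> (real \<times> real) measure) \<Rightarrow> real \<Rightarrow> real \<Rightarrow> real" where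
  "partial_copula K s1 s2 = (LINT t:{0..1}|lebesgue. cond_copula K t s1 s2)"

definition psi :: "(real \<Rightarrow> real \<Rightarrow> real \<Rightarrow> real) \<Rightarrow> (real \<Rightarrow> real \<Rightarrow> real \<Rightarrow> real)" where
  "psi C u1 u2 v = (let K = (SOME K. cond_kernel C K) in
     LINT t:{0..v}|lebesgue. partial_copula K (F13 K u1 t) (F23 K u2 t))"

definition dinf :: "(real \<Rightarrow> real \<Rightarrow> real \<Rightarrow> real) \<Rightarrow> (real \<Rightarrow> real \<Rightarrow> real \<Rightarrow> real) \<Rightarrow> real" where
  "dinf C1 C2 = (SUP x\<in>{0..1} \<times> {0..1} \<times> {0..1}.
     \<bar>C1 (fst x) (fst (snd x)) (snd (snd x)) - C2 (fst x) (fst (snd x)) (snd (snd x))\<bar>)"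

end

theory Submission
  imports Defs
begin

(*
  If psi were continuous at C, then psi C would be the limit of psi D for copulas D tending
  to C. But psi fixes a dense set of copulas, so taking such D gives psi C = C, contradicting
  d(C, psi C) > 0.

  The dense set consists of grid copulas. Cut the cube into n^3 cells, list them layer by layer
  along the v-axis, and cut [0,1] into consecutive intervals whose lengths are the C-volumes of
  the cells. On the interval belonging to a cell, let the conditional law of (U1,U2) given
  U3 = t be uniform on the (u1,u2)-face of that cell. The resulting copula agrees with C on the
  grid {a/n}^3, so it is 6/n-close to C because copulas are 1-Lipschitz; its conditional laws
  are products with continuous margins, so its conditional copula is the independence copula
  and it is a fixed point of psi.

  The distance d(C, psi C) only carries information because psi C is bounded; this rests on
  Sklar's theorem for the conditional laws of C, whose margins are continuous as C is in C3c.
*)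

section \<open>Rectangle measures and Sklar's theorem\<close>

lemma Icc_times_Icc_in_borel[measurable]:
  "{a..b} \<times> {c..d::real} \<in> sets (borel :: (real \<times> real) measure)"
  by (auto intro!: borel_closed closed_Times)

lemma rect_measure_mono:
  fixes M :: "(real \<times> real) measure"
  assumes "finite_measure M" "sets M = sets borel" "a \<le> a'" "b \<le> b'"
  shows "measure M ({0..a} \<times> {0..b}) \<le> measure M ({0..a'} \<times> {0..b'})"
  by (rule finite_measure.finite_measure_mono[OF assms(1)]) (use assms in auto)

lemma rect_measure_2_increasing:
  fixes M :: "(real \<times> real) measure"
  assumes fm: "finite_measure M" and sets: "sets M = sets borel" and "a1 \<le> b1" "a2 \<le> b2"
  shows "0 \<le> measure M ({0..b1} \<times> {0..b2}) - measure M ({0..a1} \<times> {0..b2})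
              - measure M ({0..b1} \<times> {0..a2}) + measure M ({0..a1} \<times> {0..a2})"
proof -
  interpret finite_measure M by fact
  have fin: "{0..a} \<times> {0..b::real} \<in> fmeasurable M" for a b
    using sets emeasure_finite by (simp add: fmeasurable_def less_top[symmetric])
  have "{0..a1} \<times> {0..b2} \<inter> {0..b1} \<times> {0..a2} = {0..a1} \<times> {0..a2}"
    using assms by auto
  then have "measure M ({0..a1} \<times> {0..b2} \<union> {0..b1} \<times> {0..a2})
      = measure M ({0..a1} \<times> {0..b2}) + measure M ({0..b1} \<times> {0..a2}) - measure M ({0..a1} \<times> {0..a2})"
    using measure_Un3[OF fin fin] by simp
  moreover have "measure M ({0..a1} \<times> {0..b2} \<union> {0..b1} \<times> {0..a2}) \<le> measure M ({0..b1} \<times> {0..b2})"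
    using assms sets by (intro finite_measure_mono) auto
  ultimately show ?thesis by linarith
qed

lemma rect_measure_eq_if_margin1_eq:
  fixes M :: "(real \<times> real) measure"
  assumes fm: "finite_measure M" and sets: "sets M = sets borel" and "y \<le> 1"
    and "measure M ({0..a} \<times> {0..1}) = measure M ({0..b} \<times> {0..1})"
  shows "measure M ({0..a} \<times> {0..y}) = measure M ({0..b} \<times> {0..y})"
  using assms(4)
proof (induction a b rule: linorder_wlog)
  case (le a b)
  then show ?case
    using rect_measure_2_increasing[OF fm sets le(1) \<open>y \<le> 1\<close>] rect_measure_mono[OF fm sets le(1), of y y]
    by linarith
qed simp

lemma rect_measure_eq_if_margin2_eq:
  fixes M :: "(real \<times> real) measure"
  assumes fm: "finite_measure M" and sets: "sets M = sets borel" and "x \<le> 1"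
    and "measure M ({0..1} \<times> {0..a}) = measure M ({0..1} \<times> {0..b})"
  shows "measure M ({0..x} \<times> {0..a}) = measure M ({0..x} \<times> {0..b})"
  using assms(4)
proof (induction a b rule: linorder_wlog)
  case (le a b)
  then show ?case
    using rect_measure_2_increasing[OF fm sets \<open>x \<le> 1\<close> le(1)] rect_measure_mono[OF fm sets _ le(1), of x x]
    by linarith
qed simp

lemma rect_measure_continuous_from_above:
  fixes M :: "(real \<times> real) measure"
  assumes "finite_measure M" "sets M = sets borel"
    and a: "decseq a" "a \<longlonglongrightarrow> u1" and b: "decseq b" "b \<longlonglongrightarrow> u2"
  shows "(\<lambda>m. measure M ({0..a m} \<times> {0..b m})) \<longlonglongrightarrow> measure M ({0..u1} \<times> {0..u2})"
proof -
  have lim_a: "(\<forall>m. x \<le> a m) \<longleftrightarrow> x \<le> u1" for x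
  proof
    assume "\<forall>m. x \<le> a m"
    then show "x \<le> u1" by (intro LIMSEQ_le_const[OF a(2)]) auto
  next
    assume "x \<le> u1"
    then show "\<forall>m. x \<le> a m" by (auto intro: order.trans[OF _ decseq_ge[OF a]])
  qed
  have lim_b: "(\<forall>m. y \<le> b m) \<longleftrightarrow> y \<le> u2" for y
  proof
    assume "\<forall>m. y \<le> b m"
    then show "y \<le> u2" by (intro LIMSEQ_le_const[OF b(2)]) auto
  next
    assume "y \<le> u2"
    then show "\<forall>m. y \<le> b m" by (auto intro: order.trans[OF _ decseq_ge[OF b]])
  qed
  have inter: "(\<Inter>m. {0..a m} \<times> {0..b m}) = {0..u1} \<times> {0..u2}"
  proof (rule set_eqI)
    fix p :: "real \<times> real"
    obtain x y where p: "p = (x, y)" by (cases p)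
    have "p \<in> (\<Inter>m. {0..a m} \<times> {0..b m}) \<longleftrightarrow> 0 \<le> x \<and> (\<forall>m. x \<le> a m) \<and> 0 \<le> y \<and> (\<forall>m. y \<le> b m)"
      unfolding p by (simp add: all_conj_distrib)
    also have "\<dots> \<longleftrightarrow> p \<in> {0..u1} \<times> {0..u2}"
      unfolding p lim_a lim_b by simp
    finally show "p \<in> (\<Inter>m. {0..a m} \<times> {0..b m}) \<longleftrightarrow> p \<in> {0..u1} \<times> {0..u2}" .
  qed
  have rects: "range (\<lambda>m. {0..a m} \<times> {0..b m}) \<subseteq> sets M"
    using assms(2) Icc_times_Icc_in_borel by blast
  have dec: "decseq (\<lambda>m. {0..a m} \<times> {0..b m})"
  proof (rule decseq_def[THEN iffD2], intro allI impI)
    fix m n :: nat assume "m \<le> n"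
    then have "a n \<le> a m" "b n \<le> b m"
      using a(1) b(1) by (simp_all add: decseqD)
    then show "{0..a n} \<times> {0..b n} \<subseteq> {0..a m} \<times> {0..b m}"
      by auto
  qed
  show ?thesis
    using finite_measure.finite_Lim_measure_decseq[OF assms(1) rects dec] unfolding inter .
qed

lemma rect_measure_eq_if_eq_on_rationals:
  fixes M N :: "(real \<times> real) measure"
  assumes M: "finite_measure M" "sets M = sets borel" and N: "finite_measure N" "sets N = sets borel"
    and eq: "\<And>q1 q2. q1 \<in> \<rat> \<inter> {0..1} \<Longrightarrow> q2 \<in> \<rat> \<inter> {0..1} \<Longrightarrow>
      measure M ({0..q1} \<times> {0..q2}) = measure N ({0..q1} \<times> {0..q2})"
    and u: "u1 \<in> {0..1}" "u2 \<in> {0..1}"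
  shows "measure M ({0..u1} \<times> {0..u2}) = measure N ({0..u1} \<times> {0..u2})"
proof -
  define d where "d u m = (of_int \<lceil>u * 2 ^ m\<rceil> / 2 ^ m :: real)" for u :: real and m :: nat
  have d_ge: "u \<le> d u m" for u m
  proof -
    have "u * 2 ^ m \<le> of_int \<lceil>u * 2 ^ m\<rceil>"
      by (rule le_of_int_ceiling)
    then show ?thesis
      unfolding d_def by (simp add: le_divide_eq)
  qed
  have d_le: "d u m \<le> u + 1 / 2 ^ m" for u m
  proof -
    have "of_int \<lceil>u * 2 ^ m\<rceil> \<le> u * 2 ^ m + 1"
      using ceiling_correct[of "u * 2 ^ m"] by linarith
    then have "d u m \<le> (u * 2 ^ m + 1) / 2 ^ m"
      unfolding d_def by (rule divide_right_mono) simp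
    also have "\<dots> = u + 1 / 2 ^ m"
      by (simp add: add_divide_distrib)
    finally show ?thesis .
  qed
  have "decseq (d u)" for u
  proof (rule decseq_SucI)
    fix m
    have "\<lceil>u * 2 ^ Suc m\<rceil> \<le> 2 * \<lceil>u * 2 ^ m\<rceil>"
      by (rule ceiling_le) (use le_of_int_ceiling[of "u * 2 ^ m"] in simp)
    then have "(of_int \<lceil>u * 2 ^ Suc m\<rceil> :: real) \<le> 2 * of_int \<lceil>u * 2 ^ m\<rceil>"
      by (metis of_int_le_iff of_int_mult of_int_numeral)
    then have "d u (Suc m) \<le> (2 * of_int \<lceil>u * 2 ^ m\<rceil>) / 2 ^ Suc m"
      unfolding d_def by (rule divide_right_mono) simp
    also have "\<dots> = d u m"
      by (simp add: d_def)
    finally show "d u (Suc m) \<le> d u m" .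
  qed
  moreover have "d u \<longlonglongrightarrow> u" for u
  proof (rule tendsto_sandwich[OF _ _ tendsto_const])
    show "(\<lambda>m. u + 1 / 2 ^ m) \<longlonglongrightarrow> u"
      using tendsto_add[OF tendsto_const LIMSEQ_divide_realpow_zero[of 2 1]] by simp
    show "\<forall>\<^sub>F m in sequentially. u \<le> d u m" "\<forall>\<^sub>F m in sequentially. d u m \<le> u + 1 / 2 ^ m"
      using d_ge d_le by simp_all
  qed
  ultimately have lim: "(\<lambda>m. measure L ({0..d u1 m} \<times> {0..d u2 m})) \<longlonglongrightarrow> measure L ({0..u1} \<times> {0..u2})"
    if "finite_measure L" "sets L = sets borel" for L
    using rect_measure_continuous_from_above[OF that] by blast
  have "d u m \<in> \<rat> \<inter> {0..1}" if "u \<in> {0..1}" for u m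
  proof -
    have "\<lceil>u * 2 ^ m\<rceil> \<le> 2 ^ m"
      by (rule ceiling_le) (use that in simp)
    then have "(of_int \<lceil>u * 2 ^ m\<rceil> :: real) \<le> 2 ^ m"
      by (metis of_int_le_iff of_int_numeral of_int_power)
    then have "d u m \<le> 1"
      unfolding d_def by simp
    moreover have "0 \<le> d u m"
      using d_ge[of u m] that by simp
    moreover have "d u m \<in> \<rat>"
      unfolding d_def by simp
    ultimately show ?thesis by simp
  qed
  then have "measure M ({0..d u1 m} \<times> {0..d u2 m}) = measure N ({0..d u1 m} \<times> {0..d u2 m})" for m
    using eq u by blast
  then show ?thesis
    using LIMSEQ_unique[OF lim[OF M]] lim[OF N] by simp
qed

lemma obtain_mono_right_inverse:
  fixes F :: "real \<Rightarrow> real"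
  assumes "continuous_on {0..1} F" "F 0 = 0" "F 1 = 1" "mono F"
  obtains g where "\<And>v. v \<in> {0..1} \<Longrightarrow> g v \<in> {0..1} \<and> F (g v) = v"
    and "\<And>a b. a \<in> {0..1} \<Longrightarrow> b \<in> {0..1} \<Longrightarrow> a \<le> b \<Longrightarrow> g a \<le> g b"
proof -
  have "\<forall>v\<in>{0..1}. \<exists>x\<in>{0..1}. F x = v"
    using IVT'[of F 0 _ 1] assms by fastforce
  then obtain g where g: "\<And>v. v \<in> {0..1} \<Longrightarrow> g v \<in> {0..1} \<and> F (g v) = v"
    by metis
  moreover have "g a \<le> g b" if "a \<in> {0..1}" "b \<in> {0..1}" "a \<le> b" for a b
  proof (rule ccontr)
    assume "\<not> g a \<le> g b"
    then have "F (g b) \<le> F (g a)" using \<open>mono F\<close> by (simp add: monoD)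
    then show False using g[OF that(1)] g[OF that(2)] that(3) \<open>\<not> g a \<le> g b\<close> by auto
  qed
  ultimately show thesis by (rule that)
qed

lemma sklar_continuous_margins:
  fixes M :: "(real \<times> real) measure"
  defines "F1 \<equiv> \<lambda>x. measure M ({0..x} \<times> {0..1})" and "F2 \<equiv> \<lambda>y. measure M ({0..1} \<times> {0..y})"
  assumes "prob_space M" and sets: "sets M = sets borel" and unit: "measure M ({0..1} \<times> {0..1}) = 1"
    and margin1: "continuous_on {0..1} F1" "F1 0 = 0"
    and margin2: "continuous_on {0..1} F2" "F2 0 = 0"
  shows "\<exists>A. copula2 A \<and> (\<forall>u1\<in>{0..1}. \<forall>u2\<in>{0..1}. measure M ({0..u1} \<times> {0..u2}) = A (F1 u1) (F2 u2))"
proof -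
  interpret prob_space M by fact
  have fm: "finite_measure M" by unfold_locales
  have mono: "mono F1" "mono F2"
    unfolding F1_def F2_def by (auto intro!: monoI rect_measure_mono[OF fm sets])
  have one: "F1 1 = 1" "F2 1 = 1"
    using unit by (simp_all add: F1_def F2_def)
  obtain g1 where
      g1: "\<And>v. v \<in> {0..1} \<Longrightarrow> g1 v \<in> {0..1} \<and> F1 (g1 v) = v"
        "\<And>a b. a \<in> {0..1} \<Longrightarrow> b \<in> {0..1} \<Longrightarrow> a \<le> b \<Longrightarrow> g1 a \<le> g1 b"
    using obtain_mono_right_inverse[OF margin1 one(1) mono(1)] by blast
  obtain g2 where
      g2: "\<And>v. v \<in> {0..1} \<Longrightarrow> g2 v \<in> {0..1} \<and> F2 (g2 v) = v"
        "\<And>a b. a \<in> {0..1} \<Longrightarrow> b \<in> {0..1} \<Longrightarrow> a \<le> b \<Longrightarrow> g2 a \<le> g2 b"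
    using obtain_mono_right_inverse[OF margin2 one(2) mono(2)] by blast
  define A where "A s1 s2 = measure M ({0..g1 s1} \<times> {0..g2 s2})" for s1 s2
  have F_unit: "F1 u \<in> {0..1}" "F2 u \<in> {0..1}" for u
    unfolding F1_def F2_def by auto
  have "A (F1 u1) (F2 u2) = measure M ({0..u1} \<times> {0..u2})"
    if "u1 \<in> {0..1}" "u2 \<in> {0..1}" for u1 u2
  proof -
    have "A (F1 u1) (F2 u2) = measure M ({0..u1} \<times> {0..g2 (F2 u2)})"
      unfolding A_def by (rule rect_measure_eq_if_margin1_eq[OF fm sets])
        (use g1(1)[OF F_unit(1)] g2(1)[OF F_unit(2)] in \<open>auto simp: F1_def\<close>)
    also have "\<dots> = measure M ({0..u1} \<times> {0..u2})"
      by (rule rect_measure_eq_if_margin2_eq[OF fm sets])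
        (use that g2(1)[OF F_unit(2)] in \<open>auto simp: F2_def\<close>)
    finally show ?thesis .
  qed
  moreover have "copula2 A"
    unfolding copula2_def
  proof (intro conjI ballI impI)
    fix u :: real assume u: "u \<in> {0..1}"
    have "A 0 u \<le> F1 (g1 0)"
      unfolding A_def F1_def using g2(1)[OF u] by (intro rect_measure_mono[OF fm sets]) auto
    then show "A 0 u = 0" using g1(1)[of 0] by (simp add: A_def measure_le_0_iff)
    have "A u 0 \<le> F2 (g2 0)"
      unfolding A_def F2_def using g1(1)[OF u] by (intro rect_measure_mono[OF fm sets]) auto
    then show "A u 0 = 0" using g2(1)[of 0] by (simp add: A_def measure_le_0_iff)
    have "A u 1 = F1 (g1 u)"
      unfolding A_def F1_def by (rule rect_measure_eq_if_margin2_eq[OF fm sets])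
        (use g1(1)[OF u] g2(1)[of 1] unit in \<open>auto simp: F2_def\<close>)
    then show "A u 1 = u" using g1(1)[OF u] by simp
    have "A 1 u = F2 (g2 u)"
      unfolding A_def F2_def by (rule rect_measure_eq_if_margin1_eq[OF fm sets])
        (use g2(1)[OF u] g1(1)[of 1] unit in \<open>auto simp: F1_def\<close>)
    then show "A 1 u = u" using g2(1)[OF u] by simp
  next
    fix a1 b1 a2 b2 :: real
    assume "a1 \<in> {0..1}" "b1 \<in> {0..1}" "a2 \<in> {0..1}" "b2 \<in> {0..1}" "a1 \<le> b1" "a2 \<le> b2"
    then show "0 \<le> A b1 b2 - A a1 b2 - A b1 a2 + A a1 a2"
      unfolding A_def by (intro rect_measure_2_increasing[OF fm sets] g1(2) g2(2))
  qed
  ultimately show ?thesis by (intro exI[of _ A]) auto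
qed

section \<open>Three-dimensional copulas\<close>

definition box3 :: "('a \<Rightarrow> 'a \<Rightarrow> 'a \<Rightarrow> real) \<Rightarrow> 'a \<Rightarrow> 'a \<Rightarrow> 'a \<Rightarrow> 'a \<Rightarrow> 'a \<Rightarrow> 'a \<Rightarrow> real" where
  "box3 F a1 b1 a2 b2 a3 b3 =
     F b1 b2 b3 - F a1 b2 b3 - F b1 a2 b3 - F b1 b2 a3 + F a1 a2 b3 + F a1 b2 a3 + F b1 a2 a3 - F a1 a2 a3"

lemma copula3_box3_nonneg:
  assumes "copula3 C" "a1 \<in> {0..1}" "b1 \<in> {0..1}" "a2 \<in> {0..1}" "b2 \<in> {0..1}" "a3 \<in> {0..1}" "b3 \<in> {0..1}"
    and "a1 \<le> b1" "a2 \<le> b2" "a3 \<le> b3"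
  shows "0 \<le> box3 C a1 b1 a2 b2 a3 b3"
  using assms unfolding copula3_def box3_def by blast

lemma copula3_boundary:
  assumes "copula3 C" "x \<in> {0..1}" "y \<in> {0..1}"
  shows "C 0 x y = 0" "C x 0 y = 0" "C x y 0 = 0" "C x 1 1 = x" "C 1 x 1 = x" "C 1 1 x = x"
  using assms unfolding copula3_def by blast+

lemma copula3_swap12:
  assumes "copula3 C"
  shows "copula3 (\<lambda>x y z. C y x z)"
  unfolding copula3_def
proof (intro conjI ballI impI)
  fix a1 b1 a2 b2 a3 b3 :: real
  assume "a1 \<in> {0..1}" "b1 \<in> {0..1}" "a2 \<in> {0..1}" "b2 \<in> {0..1}" "a3 \<in> {0..1}" "b3 \<in> {0..1}"
    "a1 \<le> b1" "a2 \<le> b2" "a3 \<le> b3"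
  then show "0 \<le> C b2 b1 b3 - C b2 a1 b3 - C a2 b1 b3 - C b2 b1 a3
      + C a2 a1 b3 + C b2 a1 a3 + C a2 b1 a3 - C a2 a1 a3"
    using copula3_box3_nonneg[OF assms, of a2 b2 a1 b1 a3 b3] unfolding box3_def by linarith
qed (use copula3_boundary[OF assms] in auto)

lemma copula3_swap13:
  assumes "copula3 C"
  shows "copula3 (\<lambda>x y z. C z y x)"
  unfolding copula3_def
proof (intro conjI ballI impI)
  fix a1 b1 a2 b2 a3 b3 :: real
  assume "a1 \<in> {0..1}" "b1 \<in> {0..1}" "a2 \<in> {0..1}" "b2 \<in> {0..1}" "a3 \<in> {0..1}" "b3 \<in> {0..1}"
    "a1 \<le> b1" "a2 \<le> b2" "a3 \<le> b3"
  then show "0 \<le> C b3 b2 b1 - C b3 b2 a1 - C b3 a2 b1 - C a3 b2 b1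
      + C b3 a2 a1 + C a3 b2 a1 + C a3 a2 b1 - C a3 a2 a1"
    using copula3_box3_nonneg[OF assms, of a3 b3 a2 b2 a1 b1] unfolding box3_def by linarith
qed (use copula3_boundary[OF assms] in auto)

lemma copula3_increment1:
  assumes C: "copula3 C" and "a \<le> b" "a \<in> {0..1}" "b \<in> {0..1}" "y \<in> {0..1}" "z \<in> {0..1}"
  shows "0 \<le> C b y z - C a y z \<and> C b y z - C a y z \<le> b - a"
proof -
  have "0 \<le> box3 C a b 0 y 0 z" "0 \<le> box3 C a b 0 y z 1" "0 \<le> box3 C a b y 1 0 1"
    using assms by (auto intro!: copula3_box3_nonneg[OF C])
  then show ?thesis
    using assms copula3_boundary[OF C] unfolding box3_def by (simp add: atLeastAtMost_iff)
qed

lemma copula3_lipschitz1: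
  assumes "copula3 C" "a \<in> {0..1}" "b \<in> {0..1}" "y \<in> {0..1}" "z \<in> {0..1}"
  shows "\<bar>C b y z - C a y z\<bar> \<le> \<bar>b - a\<bar>"
  using copula3_increment1[OF assms(1), of a b y z] copula3_increment1[OF assms(1), of b a y z] assms
  by (cases "a \<le> b") auto

lemma copula3_lipschitz:
  assumes C: "copula3 C" and x: "x1 \<in> {0..1}" "x2 \<in> {0..1}" "x3 \<in> {0..1}"
    and y: "y1 \<in> {0..1}" "y2 \<in> {0..1}" "y3 \<in> {0..1}"
  shows "\<bar>C x1 x2 x3 - C y1 y2 y3\<bar> \<le> \<bar>x1 - y1\<bar> + \<bar>x2 - y2\<bar> + \<bar>x3 - y3\<bar>"
proof -
  have "\<bar>C x1 x2 x3 - C y1 x2 x3\<bar> \<le> \<bar>x1 - y1\<bar>"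
    using copula3_lipschitz1[OF C, of y1 x1 x2 x3] x y by simp
  moreover have "\<bar>C y1 x2 x3 - C y1 y2 x3\<bar> \<le> \<bar>x2 - y2\<bar>"
    using copula3_lipschitz1[OF copula3_swap12[OF C], of y2 x2 y1 x3] x y by simp
  moreover have "\<bar>C y1 y2 x3 - C y1 y2 y3\<bar> \<le> \<bar>x3 - y3\<bar>"
    using copula3_lipschitz1[OF copula3_swap13[OF C], of y3 x3 y2 y1] x y by simp
  ultimately show ?thesis by linarith
qed

lemma copula3_unit:
  assumes "copula3 C" "x \<in> {0..1}" "y \<in> {0..1}" "z \<in> {0..1}"
  shows "C x y z \<in> {0..1}"
  using copula3_increment1[OF assms(1), of 0 x y z] copula3_boundary[OF assms(1), of y z] assms by auto

section \<open>Conditional kernels\<close>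

lemma cond_kernelD:
  assumes "cond_kernel C K"
  shows cond_kernel_prob_space: "prob_space (K t)"
    and cond_kernel_sets: "sets (K t) = sets borel"
    and cond_kernel_unit_square: "measure (K t) ({0..1} \<times> {0..1}) = 1"
  using assms by (auto simp: cond_kernel_def measure_def)

lemma cond_kernel_finite_measure: "cond_kernel C K \<Longrightarrow> finite_measure (K t)"
  using cond_kernel_prob_space[of C K t] by (simp add: prob_space_def)

lemma cond_kernel_measurable[measurable]:
  "cond_kernel C K \<Longrightarrow> (\<lambda>t. measure (K t) ({0..u1} \<times> {0..u2})) \<in> borel_measurable lborel"
  by (simp add: cond_kernel_def)

lemma cond_kernel_integral:
  "cond_kernel C K \<Longrightarrow> u1 \<in> {0..1} \<Longrightarrow> u2 \<in> {0..1} \<Longrightarrow> v \<in> {0..1} \<Longrightarrow>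
    C u1 u2 v = (LINT t:{0..v}|lborel. measure (K t) ({0..u1} \<times> {0..u2}))"
  by (simp add: cond_kernel_def)

lemma cond_kernel_measure_le_1: "cond_kernel C K \<Longrightarrow> measure (K t) A \<le> 1"
  using prob_space.prob_le_1[OF cond_kernel_prob_space] .

lemma cond_kernel_integrable:
  assumes "cond_kernel C K"
  shows "integrable lborel (\<lambda>t. indicator {a..b} t * measure (K t) ({0..u1} \<times> {0..u2}))"
proof -
  have "integrable lborel (\<lambda>t. indicator {a..b} t *\<^sub>R measure (K t) ({0..u1} \<times> {0..u2}))"
    using assms cond_kernel_measure_le_1[OF assms]
    by (intro integrableI_bounded_set_indicator[where B=1]) (auto simp: emeasure_lborel_Icc_eq)
  then show ?thesis by simp
qed

lemma cond_kernel_box3_nonneg: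
  assumes K: "cond_kernel C K" and "a1 \<le> b1" "a2 \<le> b2" "a3 \<le> b3"
    and "a1 \<in> {0..1}" "b1 \<in> {0..1}" "a2 \<in> {0..1}" "b2 \<in> {0..1}" "a3 \<in> {0..1}" "b3 \<in> {0..1}"
  shows "0 \<le> box3 C a1 b1 a2 b2 a3 b3"
proof -
  define h where "h v x y t = indicator {0..v} t * measure (K t) ({0..x} \<times> {0..y})" for v x y t :: real
  have [simp]: "integrable lborel (h v x y)" for v x y
    unfolding h_def using cond_kernel_integrable[OF K] .
  have C_h: "C x y v = (\<integral>t. h v x y t \<partial>lborel)" if "x \<in> {0..1}" "y \<in> {0..1}" "v \<in> {0..1}" for v x y
    using cond_kernel_integral[OF K that] unfolding h_def set_lebesgue_integral_def by simp
  define G where "G t = measure (K t) ({0..b1} \<times> {0..b2}) - measure (K t) ({0..a1} \<times> {0..b2})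
    - measure (K t) ({0..b1} \<times> {0..a2}) + measure (K t) ({0..a1} \<times> {0..a2})" for t
  have "0 \<le> G t" for t
    unfolding G_def
    by (rule rect_measure_2_increasing[OF cond_kernel_finite_measure[OF K] cond_kernel_sets[OF K]])
      (use assms in auto)
  then have "0 \<le> (\<integral>t. (indicator {0..b3} t - indicator {0..a3} t) * G t \<partial>lborel)"
    using \<open>a3 \<le> b3\<close> by (intro integral_nonneg_AE) (auto simp: indicator_def)
  also have "(\<lambda>t. (indicator {0..b3} t - indicator {0..a3} t) * G t) =
      (\<lambda>t. h b3 b1 b2 t - h b3 a1 b2 t - h b3 b1 a2 t - h a3 b1 b2 t
        + h b3 a1 a2 t + h a3 a1 b2 t + h a3 b1 a2 t - h a3 a1 a2 t)"
    by (simp add: fun_eq_iff h_def G_def algebra_simps)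
  also have "(\<integral>t. \<dots> t \<partial>lborel) = box3 C a1 b1 a2 b2 a3 b3"
    using assms by (simp add: C_h box3_def)
  finally show ?thesis .
qed

lemma AE_eq_if_integrals_greaterThan_eq:
  fixes f g :: "real \<Rightarrow> real"
  assumes f: "integrable lborel f" "\<And>t. 0 \<le> f t" and g: "integrable lborel g" "\<And>t. 0 \<le> g t"
    and eq: "\<And>x. (\<integral>t. f t * indicator {x<..} t \<partial>lborel) = (\<integral>t. g t * indicator {x<..} t \<partial>lborel)"
  shows "AE t in lborel. f t = g t"
proof -
  have density: "emeasure (density lborel h) {x<..} = ennreal (\<integral>t. h t * indicator {x<..} t \<partial>lborel)"
    if "integrable lborel h" "\<And>t. 0 \<le> h t" for h :: "real \<Rightarrow> real" and x
  proof -
    have [measurable]: "h \<in> borel_measurable lborel" using that(1) by auto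
    have "emeasure (density lborel h) {x<..} = (\<integral>\<^sup>+t. ennreal (h t * indicator {x<..} t) \<partial>lborel)"
      by (subst emeasure_density) (auto intro!: nn_integral_cong simp: indicator_def)
    also have "\<dots> = ennreal (\<integral>t. h t * indicator {x<..} t \<partial>lborel)"
      using that by (intro nn_integral_eq_integral integrable_real_mult_indicator) auto
    finally show ?thesis .
  qed
  have "density lborel f = density lborel g"
    by (rule measure_eqI_lessThan) (use density[OF f] density[OF g] eq in auto)
  then have "AE t in lborel. ennreal (f t) = ennreal (g t)"
    using f g by (intro sigma_finite_measure.density_unique[OF sigma_finite_lborel]) auto
  then show ?thesis
    by eventually_elim (use f g in auto)
qed

lemma cond_kernel_unique_rect_AE:
  assumes K1: "cond_kernel C K1" and K2: "cond_kernel C K2" and u: "u1 \<in> {0..1}" "u2 \<in> {0..1}"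
  shows "AE t in lborel. t \<in> {0..1} \<longrightarrow>
    measure (K1 t) ({0..u1} \<times> {0..u2}) = measure (K2 t) ({0..u1} \<times> {0..u2})"
proof -
  define f where "f K t = indicator {0..1} t * measure (K t) ({0..u1} \<times> {0..u2})"
    for K :: "real \<Rightarrow> (real \<times> real) measure" and t :: real
  have tail: "(\<integral>t. f K t * indicator {x<..} t \<partial>lborel) = C u1 u2 1 - (if x < 0 then 0 else C u1 u2 (min x 1))"
    if K: "cond_kernel C K" for K x
  proof -
    have int: "integrable lborel (f K)"
      unfolding f_def using cond_kernel_integrable[OF K] .
    have "(\<integral>t. f K t * indicator {..x} t \<partial>lborel) = (if x < 0 then 0 else C u1 u2 (min x 1))"
    proof (cases "x < 0")
      case True
      then have "(\<lambda>t. f K t * indicator {..x} t) = (\<lambda>t. 0)"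
        by (auto simp: f_def indicator_def)
      then show ?thesis using True by simp
    next
      case False
      then have "(\<lambda>t. f K t * indicator {..x} t) = (\<lambda>t. indicator {0..min x 1} t *\<^sub>R measure (K t) ({0..u1} \<times> {0..u2}))"
        by (auto simp: f_def indicator_def)
      then show ?thesis
        using False cond_kernel_integral[OF K u, of "min x 1"] by (simp add: set_lebesgue_integral_def)
    qed
    moreover have "(\<lambda>t. f K t * indicator {x<..} t) = (\<lambda>t. f K t - f K t * indicator {..x} t)"
      by (auto simp: indicator_def)
    moreover have "(\<integral>t. f K t \<partial>lborel) = C u1 u2 1"
      using cond_kernel_integral[OF K u, of 1] by (simp add: f_def set_lebesgue_integral_def)
    ultimately show ?thesis
      using int integrable_real_mult_indicator[OF _ int] by simp
  qed
  have "AE t in lborel. f K1 t = f K2 t"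
  proof (rule AE_eq_if_integrals_greaterThan_eq)
    show "integrable lborel (f K1)" "integrable lborel (f K2)"
      unfolding f_def using cond_kernel_integrable[OF K1] cond_kernel_integrable[OF K2] by auto
    show "0 \<le> f K1 t" "0 \<le> f K2 t" for t
      by (simp_all add: f_def)
    show "(\<integral>t. f K1 t * indicator {x<..} t \<partial>lborel) = (\<integral>t. f K2 t * indicator {x<..} t \<partial>lborel)" for x
      unfolding tail[OF K1] tail[OF K2] ..
  qed
  then show ?thesis
  proof eventually_elim
    case (elim t)
    show ?case
    proof
      assume "t \<in> {0..1}"
      then show "measure (K1 t) ({0..u1} \<times> {0..u2}) = measure (K2 t) ({0..u1} \<times> {0..u2})"
        using elim by (simp add: f_def)
    qed
  qed
qed

lemma cond_kernel_unique_AE: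
  assumes K1: "cond_kernel C K1" and K2: "cond_kernel C K2"
  shows "AE t in lborel. t \<in> {0..1} \<longrightarrow> (\<forall>u1\<in>{0..1}. \<forall>u2\<in>{0..1}.
    measure (K1 t) ({0..u1} \<times> {0..u2}) = measure (K2 t) ({0..u1} \<times> {0..u2}))"
proof -
  define Q where "Q = \<rat> \<inter> {0..1::real}"
  have "countable (Q \<times> Q)"
    unfolding Q_def by (intro countable_SIGMA countable_Int1 countable_rat)
  then have "AE t in lborel. \<forall>q\<in>Q \<times> Q. t \<in> {0..1} \<longrightarrow>
      measure (K1 t) ({0..fst q} \<times> {0..snd q}) = measure (K2 t) ({0..fst q} \<times> {0..snd q})"
  proof (rule AE_ball_countable[THEN iffD2], intro ballI)
    fix q assume "q \<in> Q \<times> Q"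
    then show "AE t in lborel. t \<in> {0..1} \<longrightarrow>
        measure (K1 t) ({0..fst q} \<times> {0..snd q}) = measure (K2 t) ({0..fst q} \<times> {0..snd q})"
      by (intro cond_kernel_unique_rect_AE[OF K1 K2]) (auto simp: Q_def)
  qed
  then show ?thesis
  proof eventually_elim
    case (elim t)
    show ?case
    proof (intro impI ballI)
      fix u1 u2 :: real assume u: "t \<in> {0..1}" "u1 \<in> {0..1}" "u2 \<in> {0..1}"
      show "measure (K1 t) ({0..u1} \<times> {0..u2}) = measure (K2 t) ({0..u1} \<times> {0..u2})"
        by (rule rect_measure_eq_if_eq_on_rationals[OF cond_kernel_finite_measure[OF K1]
              cond_kernel_sets[OF K1] cond_kernel_finite_measure[OF K2] cond_kernel_sets[OF K2]])
          (use elim u in \<open>auto simp: Q_def\<close>)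
    qed
  qed
qed

section \<open>Conditional copulas and the partial vine copula\<close>

lemma C3c_copula3: "C \<in> C3c \<Longrightarrow> copula3 C"
  by (simp add: C3c_def)

lemma C3c_cond_kernel: "C \<in> C3c \<Longrightarrow> cond_kernel C (SOME K. cond_kernel C K)"
  unfolding C3c_def by (metis (mono_tags, lifting) mem_Collect_eq someI_ex)

lemma continuous_eq_0_at_0:
  fixes f :: "real \<Rightarrow> real"
  assumes "continuous_on UNIV f" and "\<And>x. x < 0 \<Longrightarrow> f x = 0"
  shows "f 0 = 0"
proof -
  have "(f \<longlongrightarrow> f 0) (at_left 0)"
    using assms(1) by (auto simp: continuous_on_def filterlim_at_split)
  moreover have "(f \<longlongrightarrow> 0) (at_left 0)"
    using eventually_at_left_real[of "-1" "0::real"] assms(2)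
    by (intro tendsto_eventually) (auto elim: eventually_mono)
  ultimately show ?thesis
    using tendsto_unique[OF trivial_limit_at_left_real] by blast
qed

lemma C3c_cond_margins_AE:
  assumes "C \<in> C3c" and K: "cond_kernel C K"
  shows "AE t in lborel. t \<in> {0..1} \<longrightarrow>
    continuous_on {0..1} (\<lambda>x. F13 K x t) \<and> F13 K 0 t = 0 \<and>
    continuous_on {0..1} (\<lambda>x. F23 K x t) \<and> F23 K 0 t = 0"
proof -
  obtain K0 where K0: "cond_kernel C K0" and "AE t in lborel. t \<in> {0..1} \<longrightarrow>
      continuous_on UNIV (\<lambda>x. F13 K0 x t) \<and> continuous_on UNIV (\<lambda>x. F23 K0 x t)"
    using assms(1) unfolding C3c_def by blast
  from this(2) cond_kernel_unique_AE[OF K0 K] show ?thesis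
  proof eventually_elim
    case (elim t)
    show ?case
    proof
      assume t: "t \<in> {0..1}"
      have F13: "F13 K x t = F13 K0 x t" and F23: "F23 K x t = F23 K0 x t" if "x \<in> {0..1}" for x
        using elim t that by (simp_all add: F13_def F23_def)
      have cont: "continuous_on UNIV (\<lambda>x. F13 K0 x t)" "continuous_on UNIV (\<lambda>x. F23 K0 x t)"
        using elim t by auto
      have "F13 K0 0 t = 0" "F23 K0 0 t = 0"
        by (rule continuous_eq_0_at_0[OF cont(1)], simp add: F13_def)
           (rule continuous_eq_0_at_0[OF cont(2)], simp add: F23_def)
      moreover have "continuous_on {0..1} (\<lambda>x. F13 K x t)"
        by (rule continuous_on_eq[OF continuous_on_subset[OF cont(1)]]) (simp_all add: F13)
      moreover have "continuous_on {0..1} (\<lambda>x. F23 K x t)"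
        by (rule continuous_on_eq[OF continuous_on_subset[OF cont(2)]]) (simp_all add: F23)
      ultimately show "continuous_on {0..1} (\<lambda>x. F13 K x t) \<and> F13 K 0 t = 0 \<and>
          continuous_on {0..1} (\<lambda>x. F23 K x t) \<and> F23 K 0 t = 0"
        using F13[of 0] F23[of 0] by simp
    qed
  qed
qed

definition is_cond_copula :: "(real \<Rightarrow> (real \<times> real) measure) \<Rightarrow> real \<Rightarrow> (real \<Rightarrow> real \<Rightarrow> real) \<Rightarrow> bool" where
  "is_cond_copula K t A \<longleftrightarrow> copula2 A \<and>
     (\<forall>u1\<in>{0..1}. \<forall>u2\<in>{0..1}. measure (K t) ({0..u1} \<times> {0..u2}) = A (F13 K u1 t) (F23 K u2 t))"

lemma cond_copula_eq_Eps: "cond_copula K t = (SOME A. is_cond_copula K t A)"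
  by (simp add: cond_copula_def is_cond_copula_def)

lemma is_cond_copula_cond_copula:
  assumes "is_cond_copula K t A"
  shows "is_cond_copula K t (cond_copula K t)"
  unfolding cond_copula_eq_Eps using assms by (rule someI[of "is_cond_copula K t"])

lemma cond_copula_AE:
  assumes "C \<in> C3c" and K: "cond_kernel C K"
  shows "AE t in lborel. t \<in> {0..1} \<longrightarrow> is_cond_copula K t (cond_copula K t)"
  using C3c_cond_margins_AE[OF assms]
proof eventually_elim
  case (elim t)
  show ?case
  proof
    assume "t \<in> {0..1}"
    then have "\<exists>A. is_cond_copula K t A"
      using sklar_continuous_margins[OF cond_kernel_prob_space[OF K] cond_kernel_sets[OF K]
          cond_kernel_unit_square[OF K]] elim
      by (simp add: is_cond_copula_def F13_def F23_def)
    then show "is_cond_copula K t (cond_copula K t)"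
      using is_cond_copula_cond_copula by blast
  qed
qed

lemma cond_copula_eqI:
  assumes K: "cond_kernel C K"
    and margins: "continuous_on {0..1} (\<lambda>x. F13 K x t)" "F13 K 0 t = 0"
      "continuous_on {0..1} (\<lambda>x. F23 K x t)" "F23 K 0 t = 0"
    and A: "is_cond_copula K t A" and s: "s1 \<in> {0..1}" "s2 \<in> {0..1}"
  shows "cond_copula K t s1 s2 = A s1 s2"
proof -
  have one: "F13 K 1 t = 1" "F23 K 1 t = 1"
    using cond_kernel_unit_square[OF K] by (simp_all add: F13_def F23_def)
  obtain x1 where x1: "x1 \<in> {0..1}" "F13 K x1 t = s1"
    using IVT'[of "\<lambda>x. F13 K x t" 0 s1 1] margins(1,2) one(1) s(1) by auto
  obtain x2 where x2: "x2 \<in> {0..1}" "F23 K x2 t = s2"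
    using IVT'[of "\<lambda>x. F23 K x t" 0 s2 1] margins(3,4) one(2) s(2) by auto
  have "measure (K t) ({0..x1} \<times> {0..x2}) = B s1 s2" if "is_cond_copula K t B" for B
  proof -
    have "measure (K t) ({0..x1} \<times> {0..x2}) = B (F13 K x1 t) (F23 K x2 t)"
      using that x1(1) x2(1) unfolding is_cond_copula_def by blast
    then show ?thesis
      using x1(2) x2(2) by simp
  qed
  from this[OF A] this[OF is_cond_copula_cond_copula[OF A]] show ?thesis
    by linarith
qed

lemma copula2_unit:
  assumes "copula2 A" "x \<in> {0..1}" "y \<in> {0..1}"
  shows "A x y \<in> {0..1}"
proof -
  from assms(1) have bnd: "\<And>u. u \<in> {0..1} \<Longrightarrow> A 0 u = 0 \<and> A u 0 = 0 \<and> A u 1 = u \<and> A 1 u = u"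
    and inc: "\<And>a1 b1 a2 b2. a1 \<in> {0..1} \<Longrightarrow> b1 \<in> {0..1} \<Longrightarrow> a2 \<in> {0..1} \<Longrightarrow> b2 \<in> {0..1} \<Longrightarrow>
        a1 \<le> b1 \<Longrightarrow> a2 \<le> b2 \<Longrightarrow> 0 \<le> A b1 b2 - A a1 b2 - A b1 a2 + A a1 a2"
    unfolding copula2_def by auto
  show ?thesis
    using inc[of 0 x 0 y] inc[of 0 x y 1] bnd[of 0] bnd[of x] bnd[of y] assms(2,3) by auto
qed

lemma copula2_product: "copula2 (\<lambda>x y. x * y)"
  unfolding copula2_def
proof (intro conjI ballI impI)
  fix a1 b1 a2 b2 :: real assume "a1 \<le> b1" "a2 \<le> b2"
  then have "0 \<le> (b1 - a1) * (b2 - a2)" by simp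
  then show "0 \<le> b1 * b2 - a1 * b2 - b1 * a2 + a1 * a2" by (simp add: algebra_simps)
qed auto

lemma set_integral_Icc_unit:
  fixes f :: "real \<Rightarrow> real"
  assumes ae: "AE t in lebesgue. t \<in> {0..v} \<longrightarrow> f t \<in> {0..1}" and "v \<le> 1"
  shows "(LINT t:{0..v}|lebesgue. f t) \<in> {0..1}"
proof (cases "integrable lebesgue (\<lambda>t. indicator {0..v} t *\<^sub>R f t)")
  case True
  have "0 \<le> (\<integral>t. indicator {0..v} t *\<^sub>R f t \<partial>lebesgue)"
    using ae by (intro integral_nonneg_AE) (auto elim!: eventually_mono simp: indicator_def)
  moreover have "(\<integral>t. indicator {0..v} t *\<^sub>R f t \<partial>lebesgue) \<le> (\<integral>t. indicator {0..v} t \<partial>lebesgue)"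
  proof (rule integral_mono_AE[OF True])
    show "integrable lebesgue (indicator {0..v} :: real \<Rightarrow> real)"
      using integrable_indicator[of "{0..v}" lebesgue "1::real"] by (simp add: emeasure_lborel_Icc_eq)
    show "AE t in lebesgue. indicator {0..v} t *\<^sub>R f t \<le> indicator {0..v} t"
      using ae by eventually_elim (auto simp: indicator_def)
  qed
  moreover have "(\<integral>t. indicator {0..v} t \<partial>lebesgue) \<le> (1::real)"
    using \<open>v \<le> 1\<close> by (simp add: measure_def emeasure_lborel_Icc_eq)
  ultimately show ?thesis
    by (simp add: set_lebesgue_integral_def)
next
  case False
  then show ?thesis
    by (simp add: set_lebesgue_integral_def not_integrable_integral_eq)
qed

lemma partial_copula_unit:
  assumes "C \<in> C3c" "cond_kernel C K" "s1 \<in> {0..1}" "s2 \<in> {0..1}"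
  shows "partial_copula K s1 s2 \<in> {0..1}"
proof -
  have "AE t in lborel. t \<in> {0..1} \<longrightarrow> cond_copula K t s1 s2 \<in> {0..1}"
    using cond_copula_AE[OF assms(1,2)]
    by eventually_elim (use copula2_unit assms(3,4) in \<open>auto simp: is_cond_copula_def\<close>)
  then show ?thesis
    unfolding partial_copula_def by (intro set_integral_Icc_unit AE_completion) auto
qed

lemma F13_unit: "cond_kernel C K \<Longrightarrow> F13 K x t \<in> {0..1}"
  and F23_unit: "cond_kernel C K \<Longrightarrow> F23 K x t \<in> {0..1}"
  by (simp_all add: F13_def F23_def cond_kernel_measure_le_1)

lemma psi_unit:
  assumes "C \<in> C3c" "u1 \<in> {0..1}" "u2 \<in> {0..1}" "v \<in> {0..1}"
  shows "psi C u1 u2 v \<in> {0..1}"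
proof -
  define K where "K = (SOME K. cond_kernel C K)"
  have K: "cond_kernel C K"
    unfolding K_def by (rule C3c_cond_kernel[OF assms(1)])
  show ?thesis
    unfolding psi_def K_def[symmetric] Let_def
    using assms(4) partial_copula_unit[OF assms(1) K F13_unit[OF K] F23_unit[OF K]]
    by (intro set_integral_Icc_unit) auto
qed

definition cond_independent :: "(real \<Rightarrow> (real \<times> real) measure) \<Rightarrow> bool" where
  "cond_independent K \<longleftrightarrow> (AE t in lborel. t \<in> {0..1} \<longrightarrow>
     (\<forall>u1\<in>{0..1}. \<forall>u2\<in>{0..1}. measure (K t) ({0..u1} \<times> {0..u2}) = F13 K u1 t * F23 K u2 t))"

lemma cond_independent_cond_kernel:
  assumes K: "cond_kernel C K" and K': "cond_kernel C K'" and "cond_independent K"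
  shows "cond_independent K'"
  using cond_kernel_unique_AE[OF K K'] assms(3) unfolding cond_independent_def
proof eventually_elim
  case (elim t)
  show ?case
  proof (intro impI ballI)
    fix u1 u2 :: real assume t: "t \<in> {0..1}" and u: "u1 \<in> {0..1}" "u2 \<in> {0..1}"
    have eq: "\<forall>x\<in>{0..1}. \<forall>y\<in>{0..1}. measure (K t) ({0..x} \<times> {0..y}) = measure (K' t) ({0..x} \<times> {0..y})"
      using elim(1) t by blast
    have "measure (K' t) ({0..u1} \<times> {0..u2}) = measure (K t) ({0..u1} \<times> {0..u2})"
      using eq u by simp
    also have "\<dots> = F13 K u1 t * F23 K u2 t"
      using elim(2) t u by blast
    also have "\<dots> = F13 K' u1 t * F23 K' u2 t"
      using eq u by (simp add: F13_def F23_def)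
    finally show "measure (K' t) ({0..u1} \<times> {0..u2}) = F13 K' u1 t * F23 K' u2 t" .
  qed
qed

lemma cond_copula_product_AE:
  assumes "C \<in> C3c" and K: "cond_kernel C K" and "cond_independent K"
  shows "AE t in lborel. t \<in> {0..1} \<longrightarrow> (\<forall>s1\<in>{0..1}. \<forall>s2\<in>{0..1}. cond_copula K t s1 s2 = s1 * s2)"
  using C3c_cond_margins_AE[OF assms(1) K] assms(3) unfolding cond_independent_def
proof eventually_elim
  case (elim t)
  show ?case
  proof (intro impI ballI)
    fix s1 s2 :: real assume "t \<in> {0..1}" "s1 \<in> {0..1}" "s2 \<in> {0..1}"
    moreover from this have "is_cond_copula K t (\<lambda>x y. x * y)"
      using elim copula2_product by (simp add: is_cond_copula_def)
    ultimately show "cond_copula K t s1 s2 = s1 * s2"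
      using elim by (intro cond_copula_eqI[OF K]) auto
  qed
qed

lemma psi_eq_self_if_cond_independent:
  assumes C: "C \<in> C3c" and "cond_kernel C K" "cond_independent K"
    and u: "u1 \<in> {0..1}" "u2 \<in> {0..1}" "v \<in> {0..1}"
  shows "psi C u1 u2 v = C u1 u2 v"
proof -
  define K0 where "K0 = (SOME K. cond_kernel C K)"
  have K0: "cond_kernel C K0"
    unfolding K0_def by (rule C3c_cond_kernel[OF C])
  have indep: "cond_independent K0"
    by (rule cond_independent_cond_kernel[OF assms(2) K0 assms(3)])
  have ae_lebesgue: "AE t in lebesgue. t \<in> {0..1} \<longrightarrow>
      (\<forall>s1\<in>{0..1}. \<forall>s2\<in>{0..1}. cond_copula K0 t s1 s2 = s1 * s2) \<and>
      (\<forall>x1\<in>{0..1}. \<forall>x2\<in>{0..1}. measure (K0 t) ({0..x1} \<times> {0..x2}) = F13 K0 x1 t * F23 K0 x2 t)"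
    using cond_copula_product_AE[OF C K0 indep] indep unfolding cond_independent_def
    by (intro AE_completion) (auto elim: eventually_mono)
  have partial: "partial_copula K0 s1 s2 = s1 * s2" if s: "s1 \<in> {0..1}" "s2 \<in> {0..1}" for s1 s2
  proof -
    have ae: "AE t in lebesgue. indicator {0..1} t *\<^sub>R (s1 * s2) = indicator {0..1} t *\<^sub>R cond_copula K0 t s1 s2"
      using ae_lebesgue
    proof eventually_elim
      case (elim t)
      then have "t \<in> {0..1} \<Longrightarrow> cond_copula K0 t s1 s2 = s1 * s2"
        using s by blast
      then show ?case
        by (simp split: split_indicator)
    qed
    have m: "(\<lambda>t::real. indicator {0..1} t *\<^sub>R (s1 * s2)) \<in> borel_measurable lebesgue"
      by (intro measurable_completion) measurable
    have "(\<integral>t. indicator {0..1} t *\<^sub>R cond_copula K0 t s1 s2 \<partial>lebesgue) =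
        (\<integral>t. indicator {0..1} (t::real) *\<^sub>R (s1 * s2) \<partial>lebesgue)"
      using borel_measurable_AE[OF m ae] m ae
      by (intro Bochner_Integration.integral_cong_AE) (auto elim: eventually_mono)
    then have "partial_copula K0 s1 s2 = (\<integral>t. indicator {0..1} (t::real) *\<^sub>R (s1 * s2) \<partial>lebesgue)"
      unfolding partial_copula_def set_lebesgue_integral_def .
    also have "\<dots> = s1 * s2"
      using set_integral_const[of "{0..1}" lebesgue "s1 * s2"]
      by (simp add: set_lebesgue_integral_def emeasure_lborel_Icc_eq)
    finally show ?thesis .
  qed
  have "psi C u1 u2 v = (LINT t:{0..v}|lebesgue. F13 K0 u1 t * F23 K0 u2 t)"
    unfolding psi_def K0_def[symmetric] Let_def using partial F13_unit[OF K0] F23_unit[OF K0] by simp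
  also have "\<dots> = (LINT t:{0..v}|lebesgue. measure (K0 t) ({0..u1} \<times> {0..u2}))"
    unfolding set_lebesgue_integral_def
  proof (rule Bochner_Integration.integral_cong_AE)
    show "(\<lambda>t. indicator {0..v} t *\<^sub>R (F13 K0 u1 t * F23 K0 u2 t)) \<in> borel_measurable lebesgue"
      unfolding F13_def F23_def using K0 by (intro measurable_completion) measurable
    show "(\<lambda>t. indicator {0..v} t *\<^sub>R measure (K0 t) ({0..u1} \<times> {0..u2})) \<in> borel_measurable lebesgue"
      using K0 by (intro measurable_completion) measurable
    show "AE t in lebesgue. indicator {0..v} t *\<^sub>R (F13 K0 u1 t * F23 K0 u2 t) =
        indicator {0..v} t *\<^sub>R measure (K0 t) ({0..u1} \<times> {0..u2})"
      using ae_lebesgue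
    proof eventually_elim
      case (elim t)
      then have "t \<in> {0..v} \<Longrightarrow> measure (K0 t) ({0..u1} \<times> {0..u2}) = F13 K0 u1 t * F23 K0 u2 t"
        using u by auto
      then show ?case
        by (simp split: split_indicator)
    qed
  qed
  also have "\<dots> = (LINT t:{0..v}|lborel. measure (K0 t) ({0..u1} \<times> {0..u2}))"
    unfolding set_lebesgue_integral_def using K0 by (intro integral_completion) measurable
  also have "\<dots> = C u1 u2 v"
    using cond_kernel_integral[OF K0 u] by simp
  finally show ?thesis .
qed

section \<open>Grid approximations\<close>

lemma box3_sum1: "(\<Sum>i<a. box3 F i (Suc i) a2 b2 a3 b3) = box3 F 0 a a2 b2 a3 b3"
  for F :: "nat \<Rightarrow> nat \<Rightarrow> nat \<Rightarrow> real"
  by (induction a) (simp_all add: box3_def)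

lemma box3_sum2: "(\<Sum>j<b. box3 F a1 b1 j (Suc j) a3 b3) = box3 F a1 b1 0 b a3 b3"
  for F :: "nat \<Rightarrow> nat \<Rightarrow> nat \<Rightarrow> real"
  by (induction b) (simp_all add: box3_def)

lemma box3_sum3: "(\<Sum>k<c. box3 F a1 b1 a2 b2 k (Suc k)) = box3 F a1 b1 a2 b2 0 c"
  for F :: "nat \<Rightarrow> nat \<Rightarrow> nat \<Rightarrow> real"
  by (induction c) (simp_all add: box3_def)

lemma sum_lessThan_mult: "(\<Sum>r<m * n. f r) = (\<Sum>q<m. \<Sum>j<n. f (q * n + j))"
  for m n :: nat
proof -
  have "(\<Sum>r<m * n. f r) = (\<Sum>q<m. sum f {q * n..<q * n + n})"
    by (rule sum.nat_group[symmetric])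
  also have "\<dots> = (\<Sum>q<m. \<Sum>j<n. f (q * n + j))"
    by (simp add: sum.atLeastLessThan_shift_0 atLeast0LessThan comp_def)
  finally show ?thesis .
qed

lemma sum_lessThan_mult3:
  fixes c n :: nat
  assumes "0 < n"
  shows "(\<Sum>r<c * n * n. g (r div n div n) (r div n mod n) (r mod n)) = (\<Sum>k<c. \<Sum>i<n. \<Sum>j<n. g k i j)"
proof -
  have "(\<Sum>r<c * n * n. g (r div n div n) (r div n mod n) (r mod n))
      = (\<Sum>q<c * n. \<Sum>j<n. g (q div n) (q mod n) j)"
    unfolding sum_lessThan_mult[of _ "c * n" n] using assms by (intro sum.cong refl) simp
  also have "\<dots> = (\<Sum>k<c. \<Sum>i<n. \<Sum>j<n. g k i j)"
    unfolding sum_lessThan_mult[of _ c n] using assms by (intro sum.cong refl) simp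
  finally show ?thesis .
qed

lemma sum_lessThan_if_less:
  fixes f :: "nat \<Rightarrow> 'a::comm_monoid_add"
  assumes "a \<le> n"
  shows "(\<Sum>i<n. if i < a then f i else 0) = (\<Sum>i<a. f i)"
proof -
  have "(\<Sum>i<n. if i < a then f i else 0) = sum f {i \<in> {..<n}. i < a}"
    by (rule sum.inter_filter[symmetric]) simp
  also have "{i \<in> {..<n}. i < a} = {..<a}"
    using assms by auto
  finally show ?thesis .
qed

definition cell_cdf :: "nat \<Rightarrow> nat \<Rightarrow> real \<Rightarrow> real" where
  "cell_cdf n i u = max 0 (min 1 (real n * u - real i))"

lemma cell_cdf_0: "cell_cdf n i 0 = 0"
  by (simp add: cell_cdf_def)

lemma cell_cdf_1: "i < n \<Longrightarrow> cell_cdf n i 1 = 1"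
  by (simp add: cell_cdf_def)

lemma cell_cdf_grid: "0 < n \<Longrightarrow> cell_cdf n i (real a / real n) = (if i < a then 1 else 0)"
  by (auto simp: cell_cdf_def)

lemma continuous_cell_cdf: "continuous_on UNIV (cell_cdf n i)"
  unfolding cell_cdf_def by (intro continuous_intros)

lemma sum_cell_cdf:
  assumes "0 < n" "x \<in> {0..1}"
  shows "(\<Sum>i<n. cell_cdf n i x) = real n * x"
proof -
  have "(\<Sum>i<m. max 0 (min 1 (y - real i))) = y" if "y \<in> {0..real m}" for y m
    using that
  proof (induction m arbitrary: y)
    case (Suc m)
    show ?case
    proof (cases "y \<le> real m")
      case True
      then show ?thesis using Suc by simp
    next
      case False
      then have "(\<Sum>i<m. max 0 (min 1 (y - real i))) = (\<Sum>i<m. 1)"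
        by (intro sum.cong) auto
      then show ?thesis using False Suc.prems by simp
    qed
  qed simp
  then show ?thesis
    unfolding cell_cdf_def using assms by (simp add: mult_le_cancel_left1)
qed

definition cell_uniform :: "nat \<Rightarrow> nat \<Rightarrow> real measure" where
  "cell_uniform n i = uniform_measure lborel {real i / real n .. real (Suc i) / real n}"

lemma prob_space_cell_uniform:
  assumes "0 < n"
  shows "prob_space (cell_uniform n i)"
proof -
  have "real i / real n < real (Suc i) / real n"
    using assms by (simp add: divide_strict_right_mono)
  then show ?thesis
    unfolding cell_uniform_def using assms
    by (intro prob_space_uniform_measure) (auto simp: emeasure_lborel_Icc_eq)
qed

lemma measure_cell_uniform:
  assumes n: "0 < n"
  shows "measure (cell_uniform n i) {0..u} = cell_cdf n i u"
proof -
  define a where "a = real i / real n"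
  define b where "b = real (Suc i) / real n"
  have ab: "a < b" "0 \<le> a" "b - a = 1 / real n" "real n * a = real i" "real n * b = real i + 1"
    using n by (auto simp: a_def b_def divide_strict_right_mono diff_divide_distrib[symmetric])
  have "measure (cell_uniform n i) {0..u} = measure lborel ({a..b} \<inter> {0..u}) / measure lborel {a..b}"
    unfolding cell_uniform_def a_def[symmetric] b_def[symmetric] using ab n
    by (intro measure_uniform_measure) (auto simp: emeasure_lborel_Icc_eq)
  also have "{a..b} \<inter> {0..u} = {a..min b u}"
    using ab by auto
  also have "measure lborel {a..min b u} / measure lborel {a..b} = real n * max 0 (min b u - a)"
    using ab n by (cases "a \<le> min b u") auto
  also have "\<dots> = cell_cdf n i u"
    using n ab by (simp add: cell_cdf_def max_mult_distrib_left min_mult_distrib_left right_diff_distrib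
        min_diff_distrib_left)
  finally show ?thesis .
qed

definition cell_measure :: "nat \<Rightarrow> nat \<Rightarrow> nat \<Rightarrow> (real \<times> real) measure" where
  "cell_measure n i j = cell_uniform n i \<Otimes>\<^sub>M cell_uniform n j"

lemma prob_space_cell_measure: "0 < n \<Longrightarrow> prob_space (cell_measure n i j)"
  unfolding cell_measure_def by (intro prob_space_pair prob_space_cell_uniform)

lemma sets_cell_measure: "sets (cell_measure n i j) = sets borel"
proof -
  have "sets (cell_measure n i j) = sets ((borel :: real measure) \<Otimes>\<^sub>M (borel :: real measure))"
    unfolding cell_measure_def cell_uniform_def by (intro sets_pair_measure_cong) simp_all
  then show ?thesis
    using borel_prod[where 'a=real and 'b=real] by metis
qed

lemma measure_cell_measure_rect:
  assumes n: "0 < n"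
  shows "measure (cell_measure n i j) ({0..u1} \<times> {0..u2}) = cell_cdf n i u1 * cell_cdf n j u2"
proof -
  interpret p2: prob_space "cell_uniform n j" by (rule prob_space_cell_uniform[OF n])
  interpret p1: prob_space "cell_uniform n i" by (rule prob_space_cell_uniform[OF n])
  have "emeasure (cell_measure n i j) ({0..u1} \<times> {0..u2})
      = emeasure (cell_uniform n i) {0..u1} * emeasure (cell_uniform n j) {0..u2}"
    unfolding cell_measure_def by (rule p2.emeasure_pair_measure_Times) (auto simp: cell_uniform_def)
  then show ?thesis
    by (simp add: measure_def enn2real_mult measure_cell_uniform[OF n, symmetric])
qed

definition slot :: "(nat \<Rightarrow> real) \<Rightarrow> real \<Rightarrow> nat" where
  "slot S t = (LEAST r. t \<le> S (Suc r))"

lemma slot_measurable[measurable]: "slot S \<in> measurable borel (count_space UNIV)"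
  unfolding slot_def by measurable

lemma slot_eqI:
  assumes mono: "mono_on {..N} S" and "r < N" "S r < t" "t \<le> S (Suc r)"
  shows "slot S t = r"
  unfolding slot_def
proof (rule Least_equality)
  fix r' assume "t \<le> S (Suc r')"
  show "r \<le> r'"
  proof (rule ccontr)
    assume "\<not> r \<le> r'"
    then have "S (Suc r') \<le> S r"
      using assms(2) by (intro mono_onD[OF mono]) auto
    then show False
      using assms(3) \<open>t \<le> S (Suc r')\<close> by linarith
  qed
qed (use assms in simp)

lemma ex_slot:
  fixes S :: "nat \<Rightarrow> real"
  assumes "S 0 < t" "t \<le> S N"
  shows "\<exists>r<N. S r < t \<and> t \<le> S (Suc r)"
  using assms
proof (induction N)
  case (Suc N)
  then show ?case
    by (cases "t \<le> S N") (auto intro: less_SucI)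
qed simp

lemma slot_indicator_sum:
  fixes g :: "nat \<Rightarrow> real"
  assumes mono: "mono_on {..N} S" and "S 0 < t" "t \<le> S N"
  shows "g (slot S t) = (\<Sum>r<N. g r * indicator {S r<..S (Suc r)} t)"
proof -
  obtain r0 where r0: "r0 < N" "S r0 < t" "t \<le> S (Suc r0)"
    using ex_slot[OF assms(2,3)] by blast
  have "indicator {S r<..S (Suc r)} t = (if r = r0 then 1 else 0 :: real)" if "r < N" for r
  proof (cases "r = r0")
    case False
    then have "t \<notin> {S r<..S (Suc r)}"
      using slot_eqI[OF mono that, of t] slot_eqI[OF mono r0] by auto
    then show ?thesis
      using False by simp
  qed (use r0 in simp)
  then have "(\<Sum>r<N. g r * indicator {S r<..S (Suc r)} t) = (\<Sum>r<N. if r = r0 then g r else 0)"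
    by (intro sum.cong) auto
  also have "\<dots> = g r0"
    using r0(1) by simp
  finally show ?thesis
    using slot_eqI[OF mono r0] by simp
qed

lemma integral_slot:
  fixes S :: "nat \<Rightarrow> real" and g :: "nat \<Rightarrow> real"
  assumes mono: "mono_on {..N} S" and "S 0 = 0" and v: "0 \<le> v" "v \<le> S N"
  shows "(LINT t:{0..v}|lborel. g (slot S t)) = (\<Sum>r<N. g r * (min v (S (Suc r)) - min v (S r)))"
proof -
  define J where "J r = {S r<..S (Suc r)} \<inter> {0..v}" for r
  have S_nonneg: "0 \<le> S r" "S r \<le> S (Suc r)" if "r < N" for r
    using mono_onD[OF mono, of 0 r] mono_onD[OF mono, of r "Suc r"] that assms(2) by auto
  have ae: "AE t in lborel. indicator {0..v} t *\<^sub>R g (slot S t) = (\<Sum>r<N. g r * indicator (J r) t)"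
    using AE_lborel_singleton[of 0]
  proof eventually_elim
    case (elim t)
    show ?case
    proof (cases "t \<in> {0..v}")
      case True
      then show ?thesis
        using elim slot_indicator_sum[OF mono, of t g] assms(2) v
        by (simp add: J_def indicator_inter_arith)
    next
      case False
      then show ?thesis by (simp add: J_def)
    qed
  qed
  have J_sets [measurable]: "J r \<in> sets lborel" for r
    unfolding J_def by measurable
  have J_finite: "emeasure lborel (J r) < \<infinity>" for r
  proof -
    have "emeasure lborel (J r) \<le> emeasure lborel {0..v}"
      by (rule emeasure_mono) (unfold J_def, blast, measurable)
    then show ?thesis
      by (simp add: emeasure_lborel_Icc_eq le_less_trans)
  qed
  have "(LINT t:{0..v}|lborel. g (slot S t)) = (\<integral>t. (\<Sum>r<N. g r * indicator (J r) t) \<partial>lborel)"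
    unfolding set_lebesgue_integral_def by (rule Bochner_Integration.integral_cong_AE[OF _ _ ae]) measurable
  also have "\<dots> = (\<Sum>r<N. g r * measure lborel (J r))"
    using J_finite J_sets
    by (subst Bochner_Integration.integral_sum) (auto intro!: integrable_mult_right integrable_real_indicator)
  also have "\<dots> = (\<Sum>r<N. g r * (min v (S (Suc r)) - min v (S r)))"
  proof (intro sum.cong refl)
    fix r assume "r \<in> {..<N}"
    then have "J r = {min v (S r)<..min v (S (Suc r))}"
      using S_nonneg[of r] by (auto simp: J_def)
    then show "g r * measure lborel (J r) = g r * (min v (S (Suc r)) - min v (S r))"
      using S_nonneg[of r] \<open>r \<in> {..<N}\<close> by simp
  qed
  finally show ?thesis .
qed

definition grid_values :: "(real \<Rightarrow> real \<Rightarrow> real \<Rightarrow> real) \<Rightarrow> nat \<Rightarrow> nat \<Rightarrow> nat \<Rightarrow> nat \<Rightarrow> real" where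
  "grid_values C n a b c = C (real a / real n) (real b / real n) (real c / real n)"

definition cell_mass :: "(real \<Rightarrow> real \<Rightarrow> real \<Rightarrow> real) \<Rightarrow> nat \<Rightarrow> nat \<Rightarrow> nat \<Rightarrow> nat \<Rightarrow> real" where
  "cell_mass C n k i j = box3 (grid_values C n) i (Suc i) j (Suc j) k (Suc k)"

(* Cell r = (k * n + i) * n + j is [i/n, (i+1)/n] x [j/n, (j+1)/n] x [k/n, (k+1)/n]. Listing the
   cells layer by layer in v makes the masses of the first c * n * n cells add up to c / n. *)
definition grid_mass :: "(real \<Rightarrow> real \<Rightarrow> real \<Rightarrow> real) \<Rightarrow> nat \<Rightarrow> nat \<Rightarrow> real" where
  "grid_mass C n r = cell_mass C n (r div n div n) (r div n mod n) (r mod n)"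

definition grid_cumul :: "(real \<Rightarrow> real \<Rightarrow> real \<Rightarrow> real) \<Rightarrow> nat \<Rightarrow> nat \<Rightarrow> real" where
  "grid_cumul C n r = (\<Sum>q<r. grid_mass C n q)"

lemma grid_point_unit: "0 < n \<Longrightarrow> a \<le> n \<Longrightarrow> real a / real n \<in> {0..1}"
  by (auto simp: divide_le_eq)

lemma grid_values_eq_0:
  assumes C: "copula3 C" and n: "0 < n" and "a \<le> n" "b \<le> n"
  shows "grid_values C n 0 a b = 0" "grid_values C n a 0 b = 0" "grid_values C n a b 0 = 0"
  using copula3_boundary[OF C grid_point_unit[OF n assms(3)] grid_point_unit[OF n assms(4)]]
  by (simp_all add: grid_values_def)

lemma grid_values_margins:
  assumes C: "copula3 C" and n: "0 < n" and "a \<le> n"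
  shows "grid_values C n a n n = real a / real n" "grid_values C n n a n = real a / real n"
    and "grid_values C n n n a = real a / real n"
  using copula3_boundary[OF C grid_point_unit[OF n assms(3)] grid_point_unit[OF n assms(3)]] n
  by (simp_all add: grid_values_def)

lemma cell_mass_nonneg:
  assumes C: "copula3 C" and n: "0 < n" and "k < n" "i < n" "j < n"
  shows "0 \<le> cell_mass C n k i j"
proof -
  have "cell_mass C n k i j = box3 C (real i / real n) (real (Suc i) / real n)
      (real j / real n) (real (Suc j) / real n) (real k / real n) (real (Suc k) / real n)"
    by (simp add: cell_mass_def box3_def grid_values_def)
  also have "0 \<le> \<dots>"
    using assms grid_point_unit[OF n, of i] grid_point_unit[OF n, of "Suc i"]
      grid_point_unit[OF n, of j] grid_point_unit[OF n, of "Suc j"]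
      grid_point_unit[OF n, of k] grid_point_unit[OF n, of "Suc k"]
    by (intro copula3_box3_nonneg[OF C]) (simp_all add: divide_right_mono)
  finally show ?thesis .
qed

lemma sum_cell_mass: "(\<Sum>k<c. \<Sum>i<a. \<Sum>j<b. cell_mass C n k i j) = box3 (grid_values C n) 0 a 0 b 0 c"
  by (simp add: cell_mass_def box3_sum1 box3_sum2 box3_sum3)

lemma sum_cell_mass_eq_grid_values:
  assumes C: "copula3 C" and n: "0 < n" and "a \<le> n" "b \<le> n" "c \<le> n"
  shows "(\<Sum>k<c. \<Sum>i<a. \<Sum>j<b. cell_mass C n k i j) = grid_values C n a b c"
  using assms(3-5) by (simp add: sum_cell_mass box3_def grid_values_eq_0[OF C n])

lemma cell_mass_margin1:
  assumes C: "copula3 C" and n: "0 < n" and "i < n"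
  shows "(\<Sum>k<n. \<Sum>j<n. cell_mass C n k i j) = 1 / real n"
proof -
  have "(\<Sum>k<n. \<Sum>j<n. cell_mass C n k i j) = box3 (grid_values C n) i (Suc i) 0 n 0 n"
    by (simp add: cell_mass_def box3_sum2 box3_sum3)
  also have "\<dots> = real (Suc i) / real n - real i / real n"
    using assms(3) by (simp add: box3_def grid_values_eq_0[OF C n] grid_values_margins[OF C n])
  finally show ?thesis
    by (simp add: diff_divide_distrib[symmetric])
qed

lemma cell_mass_margin2:
  assumes C: "copula3 C" and n: "0 < n" and "j < n"
  shows "(\<Sum>k<n. \<Sum>i<n. cell_mass C n k i j) = 1 / real n"
proof -
  have "(\<Sum>k<n. \<Sum>i<n. cell_mass C n k i j) = box3 (grid_values C n) 0 n j (Suc j) 0 n"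
    by (simp add: cell_mass_def box3_sum1 box3_sum3)
  also have "\<dots> = real (Suc j) / real n - real j / real n"
    using assms(3) by (simp add: box3_def grid_values_eq_0[OF C n] grid_values_margins[OF C n])
  finally show ?thesis
    by (simp add: diff_divide_distrib[symmetric])
qed

lemma grid_mass_nonneg:
  assumes C: "copula3 C" and n: "0 < n" and r: "r < n * n * n"
  shows "0 \<le> grid_mass C n r"
proof -
  have "r div n div n < n"
    using r by (simp add: less_mult_imp_div_less div_mult2_eq mult.assoc)
  then show ?thesis
    unfolding grid_mass_def using n by (intro cell_mass_nonneg[OF C n]) auto
qed

lemma grid_cumul_mono:
  assumes "copula3 C" "0 < n"
  shows "mono_on {..n * n * n} (grid_cumul C n)"
  unfolding grid_cumul_def
  by (intro mono_onI sum_mono2) (auto intro!: grid_mass_nonneg[OF assms])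

lemma grid_cumul_layer:
  assumes C: "copula3 C" and n: "0 < n" and "c \<le> n"
  shows "grid_cumul C n (c * n * n) = real c / real n"
proof -
  have "grid_cumul C n (c * n * n) = (\<Sum>k<c. \<Sum>i<n. \<Sum>j<n. cell_mass C n k i j)"
    unfolding grid_cumul_def grid_mass_def by (rule sum_lessThan_mult3[OF n])
  also have "\<dots> = grid_values C n n n c"
    using assms by (intro sum_cell_mass_eq_grid_values) auto
  finally show ?thesis
    using grid_values_margins[OF C n assms(3)] by simp
qed

lemma grid_cumul_unit:
  assumes C: "copula3 C" and n: "0 < n" and "r \<le> n * n * n"
  shows "grid_cumul C n r \<in> {0..1}"
  using mono_onD[OF grid_cumul_mono[OF C n], of 0 r] mono_onD[OF grid_cumul_mono[OF C n], of r "n * n * n"]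
    grid_cumul_layer[OF C n, of n] n assms(3)
  by (simp add: grid_cumul_def)

lemma grid_mass_margin1:
  assumes C: "copula3 C" and n: "0 < n" and "x \<in> {0..1}"
  shows "(\<Sum>r<n * n * n. cell_cdf n (r div n mod n) x * grid_mass C n r) = x"
proof -
  have "(\<Sum>r<n * n * n. cell_cdf n (r div n mod n) x * grid_mass C n r)
      = (\<Sum>k<n. \<Sum>i<n. \<Sum>j<n. cell_cdf n i x * cell_mass C n k i j)"
    unfolding grid_mass_def by (rule sum_lessThan_mult3[OF n])
  also have "\<dots> = (\<Sum>i<n. cell_cdf n i x * (\<Sum>k<n. \<Sum>j<n. cell_mass C n k i j))"
    by (subst sum.swap) (simp add: sum_distrib_left)
  also have "\<dots> = (\<Sum>i<n. cell_cdf n i x) / real n"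
    by (simp add: cell_mass_margin1[OF C n] sum_divide_distrib)
  also have "\<dots> = x"
    using sum_cell_cdf[OF n assms(3)] n by simp
  finally show ?thesis .
qed

lemma grid_mass_margin2:
  assumes C: "copula3 C" and n: "0 < n" and "x \<in> {0..1}"
  shows "(\<Sum>r<n * n * n. cell_cdf n (r mod n) x * grid_mass C n r) = x"
proof -
  have "(\<Sum>r<n * n * n. cell_cdf n (r mod n) x * grid_mass C n r)
      = (\<Sum>k<n. \<Sum>i<n. \<Sum>j<n. cell_cdf n j x * cell_mass C n k i j)"
    unfolding grid_mass_def by (rule sum_lessThan_mult3[OF n])
  also have "\<dots> = (\<Sum>k<n. \<Sum>j<n. \<Sum>i<n. cell_cdf n j x * cell_mass C n k i j)"
    by (rule sum.cong[OF refl], rule sum.swap)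
  also have "\<dots> = (\<Sum>j<n. \<Sum>k<n. \<Sum>i<n. cell_cdf n j x * cell_mass C n k i j)"
    by (rule sum.swap)
  also have "\<dots> = (\<Sum>j<n. cell_cdf n j x * (\<Sum>k<n. \<Sum>i<n. cell_mass C n k i j))"
    by (simp add: sum_distrib_left)
  also have "\<dots> = (\<Sum>j<n. cell_cdf n j x) / real n"
    by (simp add: cell_mass_margin2[OF C n] sum_divide_distrib)
  also have "\<dots> = x"
    using sum_cell_cdf[OF n assms(3)] n by simp
  finally show ?thesis .
qed

(* For t between the cumulative masses of the cells before and up to cell r, the conditional law
   is uniform on the (u1,u2)-face of cell r. *)
definition grid_kernel :: "(real \<Rightarrow> real \<Rightarrow> real \<Rightarrow> real) \<Rightarrow> nat \<Rightarrow> real \<Rightarrow> (real \<times> real) measure" where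
  "grid_kernel C n t =
     cell_measure n (slot (grid_cumul C n) t div n mod n) (slot (grid_cumul C n) t mod n)"

definition grid_approx :: "(real \<Rightarrow> real \<Rightarrow> real \<Rightarrow> real) \<Rightarrow> nat \<Rightarrow> real \<Rightarrow> real \<Rightarrow> real \<Rightarrow> real" where
  "grid_approx C n u1 u2 v = (LINT t:{0..v}|lborel. measure (grid_kernel C n t) ({0..u1} \<times> {0..u2}))"

lemma grid_kernel_rect:
  "0 < n \<Longrightarrow> measure (grid_kernel C n t) ({0..u1} \<times> {0..u2}) =
    cell_cdf n (slot (grid_cumul C n) t div n mod n) u1 * cell_cdf n (slot (grid_cumul C n) t mod n) u2"
  by (simp add: grid_kernel_def measure_cell_measure_rect)

lemma grid_kernel_margins:
  assumes "0 < n"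
  shows "F13 (grid_kernel C n) x t = cell_cdf n (slot (grid_cumul C n) t div n mod n) x"
    and "F23 (grid_kernel C n) x t = cell_cdf n (slot (grid_cumul C n) t mod n) x"
  using assms by (simp_all add: F13_def F23_def grid_kernel_rect cell_cdf_1)

lemma cond_kernel_grid_approx:
  assumes n: "0 < n"
  shows "cond_kernel (grid_approx C n) (grid_kernel C n)"
  unfolding cond_kernel_def
proof (intro conjI allI ballI)
  fix t
  show prob: "prob_space (grid_kernel C n t)" and "sets (grid_kernel C n t) = sets borel"
    unfolding grid_kernel_def by (simp_all add: prob_space_cell_measure[OF n] sets_cell_measure)
  interpret prob_space "grid_kernel C n t" by (fact prob)
  show "emeasure (grid_kernel C n t) ({0..1} \<times> {0..1}) = 1"
    using n by (simp add: emeasure_eq_measure grid_kernel_rect cell_cdf_1)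
next
  fix A :: "(real \<times> real) set"
  have "(\<lambda>t. measure (grid_kernel C n t) A) =
      (\<lambda>r. measure (cell_measure n (r div n mod n) (r mod n)) A) \<circ> slot (grid_cumul C n)"
    by (simp add: grid_kernel_def comp_def)
  also have "\<dots> \<in> borel_measurable borel"
    by (rule measurable_comp[OF slot_measurable]) simp
  finally show "(\<lambda>t. measure (grid_kernel C n t) A) \<in> borel_measurable lborel"
    by simp
qed (simp add: grid_approx_def)

lemma cond_independent_grid_kernel: "0 < n \<Longrightarrow> cond_independent (grid_kernel C n)"
  by (simp add: cond_independent_def grid_kernel_margins grid_kernel_rect)

lemma grid_approx_formula:
  assumes C: "copula3 C" and n: "0 < n" and v: "v \<in> {0..1}"
  shows "grid_approx C n u1 u2 v = (\<Sum>r<n * n * n. cell_cdf n (r div n mod n) u1 * cell_cdf n (r mod n) u2 *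
    (min v (grid_cumul C n (Suc r)) - min v (grid_cumul C n r)))"
  unfolding grid_approx_def grid_kernel_rect[OF n]
  using v n grid_cumul_layer[OF C n, of n]
  by (intro integral_slot[OF grid_cumul_mono[OF C n]]) (auto simp: grid_cumul_def)

lemma grid_approx_increment:
  assumes C: "copula3 C" and n: "0 < n" and "c \<le> n" and r: "r < n * n * n"
  shows "min (real c / real n) (grid_cumul C n (Suc r)) - min (real c / real n) (grid_cumul C n r) =
    (if r < c * n * n then grid_mass C n r else 0)"
proof -
  have mono: "grid_cumul C n a \<le> grid_cumul C n b" if "a \<le> b" "b \<le> n * n * n" for a b
    using mono_onD[OF grid_cumul_mono[OF C n]] that by auto
  have "c * n * n \<le> n * n * n"
    using assms(3) by simp
  then show ?thesis
    using mono[of r "Suc r"] mono[of "Suc r" "c * n * n"] mono[of "c * n * n" r] r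
      grid_cumul_layer[OF C n assms(3)]
    by (auto simp: grid_cumul_def)
qed

lemma copula3_grid_approx:
  assumes C: "copula3 C" and n: "0 < n"
  shows "copula3 (grid_approx C n)"
  unfolding copula3_def
proof (intro conjI ballI impI)
  have cumul: "grid_cumul C n r \<in> {0..1}" "grid_cumul C n (Suc r) \<in> {0..1}" if "r < n * n * n" for r
    using grid_cumul_unit[OF C n] that by auto
  have col: "r div n mod n < n" "r mod n < n" for r
    using n by simp_all
  fix x y :: real assume x: "x \<in> {0..1}" and y: "y \<in> {0..1}"
  show "grid_approx C n 0 x y = 0" "grid_approx C n x 0 y = 0"
    unfolding grid_approx_formula[OF C n y] by (simp_all add: cell_cdf_0)
  show "grid_approx C n x y 0 = 0"
    unfolding grid_approx_formula[OF C n, of 0, simplified]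
    using cumul by (intro sum.neutral ballI) auto
next
  fix x :: real assume x: "x \<in> {0..1}"
  have incr: "min 1 (grid_cumul C n (Suc r)) - min 1 (grid_cumul C n r) = grid_mass C n r" if "r < n * n * n" for r
    using grid_approx_increment[OF C n order.refl that] n that by simp
  have one: "(1::real) \<in> {0..1}" by simp
  show "grid_approx C n x 1 1 = x"
    unfolding grid_approx_formula[OF C n one] using grid_mass_margin1[OF C n x] n
    by (simp add: incr cell_cdf_1)
  show "grid_approx C n 1 x 1 = x"
    unfolding grid_approx_formula[OF C n one] using grid_mass_margin2[OF C n x] n
    by (simp add: incr cell_cdf_1 mult.commute)
  have "grid_approx C n 1 1 x = (\<Sum>r<n * n * n. min x (grid_cumul C n (Suc r)) - min x (grid_cumul C n r))"
    unfolding grid_approx_formula[OF C n x] using n by (simp add: cell_cdf_1)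
  also have "\<dots> = min x (grid_cumul C n (n * n * n)) - min x (grid_cumul C n 0)"
    by (rule sum_lessThan_telescope)
  also have "\<dots> = x"
    using grid_cumul_layer[OF C n, of n] x n by (simp add: grid_cumul_def)
  finally show "grid_approx C n 1 1 x = x" .
next
  fix a1 b1 a2 b2 a3 b3 :: real
  assume "a1 \<in> {0..1}" "b1 \<in> {0..1}" "a2 \<in> {0..1}" "b2 \<in> {0..1}" "a3 \<in> {0..1}" "b3 \<in> {0..1}"
    "a1 \<le> b1" "a2 \<le> b2" "a3 \<le> b3"
  then show "0 \<le> grid_approx C n b1 b2 b3 - grid_approx C n a1 b2 b3 - grid_approx C n b1 a2 b3
      - grid_approx C n b1 b2 a3 + grid_approx C n a1 a2 b3 + grid_approx C n a1 b2 a3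
      + grid_approx C n b1 a2 a3 - grid_approx C n a1 a2 a3"
    using cond_kernel_box3_nonneg[OF cond_kernel_grid_approx[OF n]] unfolding box3_def by blast
qed

lemma grid_approx_C3c:
  assumes "copula3 C" "0 < n"
  shows "grid_approx C n \<in> C3c"
  unfolding C3c_def using copula3_grid_approx[OF assms] cond_kernel_grid_approx[OF assms(2), of C]
  by (intro CollectI conjI exI[of _ "grid_kernel C n"]) (simp_all add: grid_kernel_margins[OF assms(2)] continuous_cell_cdf)

lemma grid_approx_eq_on_grid:
  assumes C: "copula3 C" and n: "0 < n" and abc: "a \<le> n" "b \<le> n" "c \<le> n"
  shows "grid_approx C n (real a / real n) (real b / real n) (real c / real n) = grid_values C n a b c"
proof -
  define g where "g k i j = cell_cdf n i (real a / real n) * cell_cdf n j (real b / real n) * cell_mass C n k i j"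
    for k i j
  have "c * n * n \<le> n * n * n"
    using abc(3) by simp
  have "grid_approx C n (real a / real n) (real b / real n) (real c / real n)
      = (\<Sum>r<n * n * n. if r < c * n * n then g (r div n div n) (r div n mod n) (r mod n) else 0)"
    unfolding grid_approx_formula[OF C n grid_point_unit[OF n abc(3)]]
    by (intro sum.cong refl) (simp add: grid_approx_increment[OF C n abc(3)] g_def grid_mass_def)
  also have "\<dots> = (\<Sum>k<c. \<Sum>i<n. \<Sum>j<n. g k i j)"
    unfolding sum_lessThan_if_less[OF \<open>c * n * n \<le> n * n * n\<close>] by (rule sum_lessThan_mult3[OF n])
  also have "\<dots> = (\<Sum>k<c. \<Sum>i<n. if i < a then (\<Sum>j<n. if j < b then cell_mass C n k i j else 0) else 0)"
    by (intro sum.cong refl) (auto simp: g_def cell_cdf_grid[OF n] intro!: sum.cong)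
  also have "\<dots> = (\<Sum>k<c. \<Sum>i<a. \<Sum>j<b. cell_mass C n k i j)"
    by (simp add: sum_lessThan_if_less abc)
  also have "\<dots> = grid_values C n a b c"
    by (rule sum_cell_mass_eq_grid_values[OF C n abc])
  finally show ?thesis .
qed

lemma ex_grid_point:
  assumes n: "0 < n" and x: "x \<in> {0..1}"
  shows "\<exists>a\<le>n. \<bar>x - real a / real n\<bar> \<le> 1 / real n"
proof -
  define a where "a = nat \<lfloor>x * real n\<rfloor>"
  have a: "real a \<le> x * real n" "x * real n < real a + 1"
    using x by (auto simp: a_def)
  moreover have "x * real n \<le> real n"
    using x n by (simp add: mult_le_cancel_right1)
  ultimately have "a \<le> n" by linarith
  moreover have "\<bar>x - real a / real n\<bar> \<le> 1 / real n"
  proof -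
    have "(x - real a / real n) * real n = x * real n - real a"
      using n by (simp add: left_diff_distrib)
    moreover have "\<bar>x * real n - real a\<bar> \<le> 1"
      using a by linarith
    ultimately have "\<bar>x - real a / real n\<bar> * real n \<le> 1"
      by (metis abs_mult abs_of_nat)
    then show ?thesis
      using n by (simp add: le_divide_eq)
  qed
  ultimately show ?thesis
    by blast
qed

lemma grid_approx_close:
  assumes C: "copula3 C" and n: "0 < n" and u: "u1 \<in> {0..1}" "u2 \<in> {0..1}" "v \<in> {0..1}"
  shows "\<bar>C u1 u2 v - grid_approx C n u1 u2 v\<bar> \<le> 6 / real n"
proof -
  obtain a b c where abc: "a \<le> n" "b \<le> n" "c \<le> n"
    and close: "\<bar>u1 - real a / real n\<bar> \<le> 1 / real n" "\<bar>u2 - real b / real n\<bar> \<le> 1 / real n"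
      "\<bar>v - real c / real n\<bar> \<le> 1 / real n"
    using ex_grid_point[OF n u(1)] ex_grid_point[OF n u(2)] ex_grid_point[OF n u(3)] by blast
  note grid = grid_point_unit[OF n abc(1)] grid_point_unit[OF n abc(2)] grid_point_unit[OF n abc(3)]
  have "\<bar>C u1 u2 v - C (real a / real n) (real b / real n) (real c / real n)\<bar> \<le> 3 / real n"
    using copula3_lipschitz[OF C u grid] close by simp
  moreover have "\<bar>grid_approx C n u1 u2 v - grid_approx C n (real a / real n) (real b / real n) (real c / real n)\<bar>
      \<le> 3 / real n"
    using copula3_lipschitz[OF copula3_grid_approx[OF C n] u grid] close by simp
  moreover have "grid_approx C n (real a / real n) (real b / real n) (real c / real n) =
      C (real a / real n) (real b / real n) (real c / real n)"
    using grid_approx_eq_on_grid[OF C n abc] by (simp add: grid_values_def)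
  ultimately show ?thesis by linarith
qed

section \<open>Discontinuity of the partial vine copula map\<close>

lemma dinf_le:
  assumes "\<And>u1 u2 v. u1 \<in> {0..1} \<Longrightarrow> u2 \<in> {0..1} \<Longrightarrow> v \<in> {0..1} \<Longrightarrow> \<bar>C1 u1 u2 v - C2 u1 u2 v\<bar> \<le> B"
  shows "dinf C1 C2 \<le> B"
  unfolding dinf_def by (rule cSUP_least) (use assms in auto)

(* dinf is a supremum over the cube, which says nothing about functions unbounded there. *)
lemma abs_le_dinf:
  assumes C1: "\<And>u1 u2 v. u1 \<in> {0..1} \<Longrightarrow> u2 \<in> {0..1} \<Longrightarrow> v \<in> {0..1} \<Longrightarrow> C1 u1 u2 v \<in> {0..1}"
    and C2: "\<And>u1 u2 v. u1 \<in> {0..1} \<Longrightarrow> u2 \<in> {0..1} \<Longrightarrow> v \<in> {0..1} \<Longrightarrow> C2 u1 u2 v \<in> {0..1}"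
    and u: "u1 \<in> {0..1}" "u2 \<in> {0..1}" "v \<in> {0..1}"
  shows "\<bar>C1 u1 u2 v - C2 u1 u2 v\<bar> \<le> dinf C1 C2"
proof -
  have "bdd_above ((\<lambda>x. \<bar>C1 (fst x) (fst (snd x)) (snd (snd x)) - C2 (fst x) (fst (snd x)) (snd (snd x))\<bar>)
      ` ({0..1} \<times> {0..1} \<times> {0..1}))"
  proof (rule bdd_aboveI[where M=1])
    fix y assume "y \<in> (\<lambda>x. \<bar>C1 (fst x) (fst (snd x)) (snd (snd x)) - C2 (fst x) (fst (snd x)) (snd (snd x))\<bar>)
      ` ({0..1} \<times> {0..1} \<times> {0..1})"
    then obtain a b c where abc: "a \<in> {0..1}" "b \<in> {0..1}" "c \<in> {0..1}" and y: "y = \<bar>C1 a b c - C2 a b c\<bar>"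
      by auto
    show "y \<le> 1"
      using C1[OF abc] C2[OF abc] unfolding y by (simp add: abs_le_iff)
  qed
  from cSUP_upper[OF _ this, of "(u1, u2, v)"] show ?thesis
    unfolding dinf_def using u by simp
qed

lemma psi_fixed_points_dense:
  assumes C: "copula3 C" and "0 < \<epsilon>"
  obtains D where "D \<in> C3c" "dinf C D < \<epsilon>"
    and "\<And>u1 u2 v. u1 \<in> {0..1} \<Longrightarrow> u2 \<in> {0..1} \<Longrightarrow> v \<in> {0..1} \<Longrightarrow> psi D u1 u2 v = D u1 u2 v"
proof -
  obtain n :: nat where "6 / \<epsilon> < real n"
    using reals_Archimedean2 by blast
  moreover have "0 < 6 / \<epsilon>"
    using \<open>0 < \<epsilon>\<close> by simp
  ultimately have n: "0 < n"
    by (metis of_nat_0_less_iff order.strict_trans)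
  have "6 / real n < \<epsilon>"
    using \<open>6 / \<epsilon> < real n\<close> \<open>0 < \<epsilon>\<close> n by (simp add: field_simps)
  show thesis
  proof (rule that[of "grid_approx C n"])
    show "grid_approx C n \<in> C3c"
      by (rule grid_approx_C3c[OF C n])
    have "dinf C (grid_approx C n) \<le> 6 / real n"
      using grid_approx_close[OF C n] by (intro dinf_le)
    then show "dinf C (grid_approx C n) < \<epsilon>"
      using \<open>6 / real n < \<epsilon>\<close> by linarith
    show "psi (grid_approx C n) u1 u2 v = grid_approx C n u1 u2 v"
      if "u1 \<in> {0..1}" "u2 \<in> {0..1}" "v \<in> {0..1}" for u1 u2 v
      using psi_eq_self_if_cond_independent[OF grid_approx_C3c[OF C n] cond_kernel_grid_approx[OF n]
          cond_independent_grid_kernel[OF n] that] .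
  qed
qed

lemma dinf_psi_le_of_fixed_point:
  assumes C: "C \<in> C3c" and D: "D \<in> C3c"
    and fixed: "\<And>u1 u2 v. u1 \<in> {0..1} \<Longrightarrow> u2 \<in> {0..1} \<Longrightarrow> v \<in> {0..1} \<Longrightarrow> psi D u1 u2 v = D u1 u2 v"
  shows "dinf C (psi C) \<le> dinf C D + dinf (psi C) (psi D)"
proof (rule dinf_le)
  fix u1 u2 v :: real assume u: "u1 \<in> {0..1}" "u2 \<in> {0..1}" "v \<in> {0..1}"
  have "\<bar>C u1 u2 v - psi C u1 u2 v\<bar> \<le> \<bar>C u1 u2 v - D u1 u2 v\<bar> + \<bar>psi C u1 u2 v - psi D u1 u2 v\<bar>"
    using fixed[OF u] by simp
  also have "\<dots> \<le> dinf C D + dinf (psi C) (psi D)"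
    using abs_le_dinf[of C D, OF copula3_unit[OF C3c_copula3[OF C]] copula3_unit[OF C3c_copula3[OF D]] u]
      abs_le_dinf[of "psi C" "psi D", OF psi_unit[OF C] psi_unit[OF D] u]
    by linarith
  finally show "\<bar>C u1 u2 v - psi C u1 u2 v\<bar> \<le> dinf C D + dinf (psi C) (psi D)" .
qed

theorem theorem6p1:
  assumes "C \<in> C3c"
    and "dinf C (psi C) \<noteq> 0"
  shows "\<not> (\<forall>e>0. \<exists>d>0. \<forall>D\<in>C3c. dinf C D < d \<longrightarrow> dinf (psi C) (psi D) < e)"
proof
  assume cont: "\<forall>e>0. \<exists>d>0. \<forall>D\<in>C3c. dinf C D < d \<longrightarrow> dinf (psi C) (psi D) < e"
  define \<epsilon> where "\<epsilon> = dinf C (psi C)"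
  have "0 \<le> \<epsilon>"
    using abs_le_dinf[of C "psi C" 0 0 0, OF copula3_unit[OF C3c_copula3[OF assms(1)]] psi_unit[OF assms(1)]]
    unfolding \<epsilon>_def by simp
  with assms(2) have "0 < \<epsilon>"
    by (simp add: \<epsilon>_def)
  then obtain d where "0 < d" and d: "\<forall>D\<in>C3c. dinf C D < d \<longrightarrow> dinf (psi C) (psi D) < \<epsilon> / 2"
    using cont half_gt_zero by blast
  obtain D where D: "D \<in> C3c" "dinf C D < min d (\<epsilon> / 2)"
    and fixed: "\<And>u1 u2 v. u1 \<in> {0..1} \<Longrightarrow> u2 \<in> {0..1} \<Longrightarrow> v \<in> {0..1} \<Longrightarrow> psi D u1 u2 v = D u1 u2 v"
    using psi_fixed_points_dense[OF C3c_copula3[OF assms(1)], of "min d (\<epsilon> / 2)"] \<open>0 < d\<close> \<open>0 < \<epsilon>\<close>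
    by auto
  have "\<epsilon> \<le> dinf C D + dinf (psi C) (psi D)"
    unfolding \<epsilon>_def by (rule dinf_psi_le_of_fixed_point[OF assms(1) D(1) fixed])
  moreover have "dinf (psi C) (psi D) < \<epsilon> / 2"
    using d D by simp
  ultimately show False
    using D(2) by linarith
qed

end
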